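(* Let $X$ be a locally compact roughly starlike Gromov $\delta$-hyperbolic space with base point $z_0$ and roughly-starlike constant $M$, and let $0<\varepsilon\le\varepsilon_0(\delta)$. Put $C_1=e^{-(1+\varepsilon M)}$ and $C_2=2e(2e^{\varepsilon M}-1)$. Then for all $x\in X$ and $0<r\le\frac12 d_\varepsilon(x)$, \[ B\Big(x,\frac{C_1r}{\rho_\varepsilon(x)}\Big)\subset B_\varepsilon(x,r)\subset B\Big(x,\frac{C_2r}{\rho_\varepsilon(x)}\Big). \] Moreover, if $y\in X$ and $d_\varepsilon(x,y)<C_1d_\varepsilon(x)/(2C_2)$, then \[ \frac{\rho_\varepsilon(x)}{C_2}d(x,y)<d_\varepsilon(x,y)\le e^{1/e}\rho_\varepsilon(x)\,d(x,y). \]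
   Context: Gromov $\delta$-hyperbolic: complete unbounded geodesic metric space such that for all geodesics $[x,y],[y,z],[z,x]$, each point of $[x,y]$ is within distance $\delta$ of $[y,z]\cup[z,x]$. Roughly starlike w.r.t. $z_0$ with constant $M$: each point is within distance $M$ of a geodesic ray starting at $z_0$. $\rho_\varepsilon(x)=e^{-\varepsilon d(x,z_0)}$; $d_\varepsilon(x,y)=\inf_\gamma\int_\gamma\rho_\varepsilon\,ds$ over rectifiable curves in $X$ joining $x$ to $y$; $X_\varepsilon=(X,d_\varepsilon)$, $\overline X_\varepsilon$ its completion, $\partial_\varepsilon X=\overline X_\varepsilon\setminus X_\varepsilon$, $d_\varepsilon(x)=\operatorname{dist}_\varepsilon(x,\partial_\varepsilon X)$. $B$ denotes balls w.r.t. $d$, $B_\varepsilon$ balls w.r.t. $d_\varepsilon$. $\varepsilon_0(\delta)>0$ is the Bonk–Heinonen–Koskela constant such that for $0<\varepsilon\le\varepsilon_0(\delta)$, $X_\varepsilon$ is a uniform space and $\overline X_\varepsilon$ is compact and geodesic. *)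

theory Defs
  imports "HOL-Analysis.Analysis"
begin

definition geodesic_seg :: "'a::metric_space set \<Rightarrow> 'a \<Rightarrow> 'a \<Rightarrow> bool" where
  "geodesic_seg S x y \<longleftrightarrow> (\<exists>\<gamma>::real \<Rightarrow> 'a. \<gamma> 0 = x \<and> \<gamma> (dist x y) = y \<and>
      (\<forall>s\<in>{0..dist x y}. \<forall>t\<in>{0..dist x y}. dist (\<gamma> s) (\<gamma> t) = \<bar>s - t\<bar>) \<and>
      S = \<gamma> ` {0..dist x y})"

definition geodesic_space :: "'a::metric_space itself \<Rightarrow> bool" where
  "geodesic_space _ \<longleftrightarrow> (\<forall>x y::'a. \<exists>S. geodesic_seg S x y)"

definition gromov_hyperbolic :: "'a::metric_space itself \<Rightarrow> real \<Rightarrow> bool" where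
  "gromov_hyperbolic T \<delta> \<longleftrightarrow>
     complete (UNIV::'a set) \<and> \<not> bounded (UNIV::'a set) \<and> geodesic_space T \<and>
     (\<forall>x y z::'a. \<forall>S1 S2 S3. geodesic_seg S1 x y \<and> geodesic_seg S2 y z \<and> geodesic_seg S3 z x
        \<longrightarrow> (\<forall>p\<in>S1. infdist p (S2 \<union> S3) \<le> \<delta>))"

definition geodesic_ray :: "(real \<Rightarrow> 'a::metric_space) \<Rightarrow> 'a \<Rightarrow> bool" where
  "geodesic_ray \<gamma> z0 \<longleftrightarrow> \<gamma> 0 = z0 \<and>
     (\<forall>s\<ge>0. \<forall>t\<ge>0. dist (\<gamma> s) (\<gamma> t) = \<bar>s - t\<bar>)"

definition roughly_starlike :: "'a::metric_space \<Rightarrow> real \<Rightarrow> bool" where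
  "roughly_starlike z0 M \<longleftrightarrow>
     (\<forall>x::'a. \<exists>\<gamma>. geodesic_ray \<gamma> z0 \<and> infdist x (\<gamma> ` {0..}) \<le> M)"

definition curve_cont :: "('a \<Rightarrow> 'a \<Rightarrow> real) \<Rightarrow> (real \<Rightarrow> 'a) \<Rightarrow> real \<Rightarrow> real \<Rightarrow> bool" where
  "curve_cont dd \<gamma> a b \<longleftrightarrow> (\<forall>t\<in>{a..b}. \<forall>e>0. \<exists>k>0. \<forall>s\<in>{a..b}.
       \<bar>s - t\<bar> < k \<longrightarrow> dd (\<gamma> s) (\<gamma> t) < e)"

definition polygon_sums :: "('a \<Rightarrow> 'a \<Rightarrow> real) \<Rightarrow> (real \<Rightarrow> 'a) \<Rightarrow> real \<Rightarrow> real \<Rightarrow> real set" where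
  "polygon_sums dd \<gamma> a b = {(\<Sum>i<n. dd (\<gamma> (t i)) (\<gamma> (t (Suc i)))) | t n.
       t 0 = a \<and> t n = b \<and> (\<forall>i<n. t i \<le> t (Suc i))}"

definition curve_len :: "('a \<Rightarrow> 'a \<Rightarrow> real) \<Rightarrow> (real \<Rightarrow> 'a) \<Rightarrow> real \<Rightarrow> real \<Rightarrow> real" where
  "curve_len dd \<gamma> a b = Sup (polygon_sums dd \<gamma> a b)"

definition rectifiable :: "('a \<Rightarrow> 'a \<Rightarrow> real) \<Rightarrow> (real \<Rightarrow> 'a) \<Rightarrow> real \<Rightarrow> real \<Rightarrow> bool" where
  "rectifiable dd \<gamma> a b \<longleftrightarrow> a \<le> b \<and> curve_cont dd \<gamma> a b \<and> bdd_above (polygon_sums dd \<gamma> a b)"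

definition line_integral :: "('a::metric_space \<Rightarrow> real) \<Rightarrow> (real \<Rightarrow> 'a) \<Rightarrow> real \<Rightarrow> real \<Rightarrow> real" where
  "line_integral \<rho> \<gamma> a b = integral {0..curve_len dist \<gamma> a b}
      (\<lambda>s. \<rho> (\<gamma> (SOME t. t \<in> {a..b} \<and> curve_len dist \<gamma> a t = s)))"

definition rho_eps :: "real \<Rightarrow> 'a::metric_space \<Rightarrow> 'a \<Rightarrow> real" where
  "rho_eps \<epsilon> z0 x = exp (- \<epsilon> * dist x z0)"

definition d_eps :: "real \<Rightarrow> 'a::metric_space \<Rightarrow> 'a \<Rightarrow> 'a \<Rightarrow> real" where
  "d_eps \<epsilon> z0 x y = Inf {line_integral (rho_eps \<epsilon> z0) \<gamma> a b | \<gamma> a b.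
       rectifiable dist \<gamma> a b \<and> \<gamma> a = x \<and> \<gamma> b = y}"

definition cauchy_wrt :: "('a \<Rightarrow> 'a \<Rightarrow> real) \<Rightarrow> (nat \<Rightarrow> 'a) \<Rightarrow> bool" where
  "cauchy_wrt dd s \<longleftrightarrow> (\<forall>e>0. \<exists>N. \<forall>m\<ge>N. \<forall>n\<ge>N. dd (s m) (s n) < e)"

text \<open>Points of the completion are Cauchy sequences; their distance is the limit.\<close>
definition compl_dist :: "('a \<Rightarrow> 'a \<Rightarrow> real) \<Rightarrow> (nat \<Rightarrow> 'a) \<Rightarrow> (nat \<Rightarrow> 'a) \<Rightarrow> real" where
  "compl_dist dd p q = lim (\<lambda>n. dd (p n) (q n))"

text \<open>Boundary points: Cauchy sequences not converging in X. Distance to the boundary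
  in the completion.\<close>
definition d_bd :: "('a \<Rightarrow> 'a \<Rightarrow> real) \<Rightarrow> 'a \<Rightarrow> real" where
  "d_bd dd x = Inf {lim (\<lambda>n. dd x (s n)) | s. cauchy_wrt dd s \<and>
       \<not> (\<exists>z. (\<lambda>n. dd (s n) z) \<longlonglongrightarrow> 0)}"

definition uniform_wrt :: "('a \<Rightarrow> 'a \<Rightarrow> real) \<Rightarrow> bool" where
  "uniform_wrt dd \<longleftrightarrow> (\<exists>A. \<forall>x y. \<exists>\<gamma> a b. rectifiable dd \<gamma> a b \<and> \<gamma> a = x \<and> \<gamma> b = y \<and>
      curve_len dd \<gamma> a b \<le> A * dd x y \<and>
      (\<forall>t\<in>{a..b}. min (curve_len dd \<gamma> a t) (curve_len dd \<gamma> t b) \<le> A * d_bd dd (\<gamma> t)))"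

text \<open>The completion is compact iff the space is totally bounded.\<close>
definition totally_bounded_wrt :: "('a \<Rightarrow> 'a \<Rightarrow> real) \<Rightarrow> bool" where
  "totally_bounded_wrt dd \<longleftrightarrow> (\<forall>e>0. \<exists>F. finite F \<and> (\<forall>x. \<exists>y\<in>F. dd x y < e))"

definition completion_geodesic :: "('a \<Rightarrow> 'a \<Rightarrow> real) \<Rightarrow> bool" where
  "completion_geodesic dd \<longleftrightarrow> (\<forall>p q. cauchy_wrt dd p \<and> cauchy_wrt dd q \<longrightarrow>
     (\<exists>\<gamma>::real \<Rightarrow> nat \<Rightarrow> 'a. (\<forall>u\<in>{0..compl_dist dd p q}. cauchy_wrt dd (\<gamma> u)) \<and>
        compl_dist dd (\<gamma> 0) p = 0 \<and> compl_dist dd (\<gamma> (compl_dist dd p q)) q = 0 \<and>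
        (\<forall>u\<in>{0..compl_dist dd p q}. \<forall>v\<in>{0..compl_dist dd p q}.
            compl_dist dd (\<gamma> u) (\<gamma> v) = \<bar>u - v\<bar>)))"

end

theory Submission
  imports Defs
begin

text \<open>
  Write \<open>\<rho>\<close> for \<open>\<rho>\<^sub>\<epsilon>\<close>, \<open>d\<^sub>\<epsilon>(x)\<close> for the distance to the boundary and
  \<open>K = 2 exp(\<epsilon> M) - 1\<close>.

  Two estimates carry the proof. First, \<open>\<rho>(x)/\<epsilon> \<le> d\<^sub>\<epsilon>(x) \<le> K \<rho>(x)/\<epsilon>\<close>. The upper
  bound comes from running out to the boundary along a geodesic ray from \<open>z\<^sub>0\<close> that passes
  within \<open>M\<close> of \<open>x\<close>. The lower bound holds because a \<open>d\<^sub>\<epsilon>\<close>-Cauchy sequence that stays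
  \<open>d\<^sub>\<epsilon>\<close>-closer than \<open>\<rho>(x)/\<epsilon>\<close> to \<open>x\<close> stays in a bounded region, where \<open>\<rho>\<close> is bounded
  below; so it is Cauchy in \<open>X\<close> and converges there.

  Second, integrating \<open>\<rho>\<close> along a geodesic gives \<open>d\<^sub>\<epsilon>(x,y) \<le> \<rho>(x) d(x,y) exp(\<epsilon> d(x,y))\<close>.
  Conversely, along a curve from \<open>x\<close> of \<open>\<rho>\<close>-length below \<open>d\<^sub>\<epsilon>(x)/2\<close> the boundary distance
  stays above \<open>d\<^sub>\<epsilon>(x)/2\<close>, so by the first estimate \<open>\<rho> > \<rho>(x)/(2K)\<close> on it, whence
  \<open>d\<^sub>\<epsilon>(x,y) \<ge> \<rho>(x) d(x,y)/(2K)\<close>.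
\<close>

section \<open>Polygonal sums and the length of a curve\<close>

lemma partition_mono:
  fixes t :: "nat \<Rightarrow> real"
  assumes "\<forall>i<n. t i \<le> t (Suc i)" "j \<le> i" "i \<le> n"
  shows "t j \<le> t i"
  by (rule lift_Suc_mono_le_ivl[where N = "{..<n}"]) (use assms in auto)

lemma partition_in_interval:
  fixes t :: "nat \<Rightarrow> real"
  assumes "t 0 = a" "t n = b" "\<forall>i<n. t i \<le> t (Suc i)" "i \<le> n"
  shows "t i \<in> {a..b}"
  using partition_mono[OF assms(3), of 0 i] partition_mono[OF assms(3), of i n] assms by auto

lemma polygon_sumsI:
  assumes "t 0 = a" "t n = b" "\<forall>i<n. t i \<le> t (Suc i)"
  shows "(\<Sum>i<n. dist (g (t i)) (g (t (Suc i)))) \<in> polygon_sums dist g a b"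
  unfolding polygon_sums_def using assms by blast

lemma polygon_sumsE:
  assumes "s \<in> polygon_sums dist g a b"
  obtains t n where "s = (\<Sum>i<n. dist (g (t i)) (g (t (Suc i))))"
    "t 0 = a" "t n = b" "\<forall>i<n. t i \<le> t (Suc i)"
  using assms unfolding polygon_sums_def by blast

lemma polygon_sums_single: "a \<le> b \<Longrightarrow> dist (g a) (g b) \<in> polygon_sums dist g a b"
  using polygon_sumsI[of "\<lambda>i. if i = 0 then a else b" a 1 b g] by simp

lemma polygon_sums_refl: "polygon_sums dist g a a = {0}"
proof -
  have "s = 0" if s_mem: "s \<in> polygon_sums dist g a a" for s
  proof -
    obtain t n where s: "s = (\<Sum>i<n. dist (g (t i)) (g (t (Suc i))))"
      and t: "t 0 = a" "t n = a" "\<forall>i<n. t i \<le> t (Suc i)"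
      using polygon_sumsE[OF s_mem] .
    have "t i = a" if "i \<le> n" for i
      using partition_in_interval[OF t that] by simp
    then show "s = 0" unfolding s by (intro sum.neutral) auto
  qed
  then show ?thesis using polygon_sums_single[of a a g] by auto
qed

lemma polygon_sums_snoc:
  assumes "s \<in> polygon_sums dist g a b" "b \<le> c"
  shows "s + dist (g b) (g c) \<in> polygon_sums dist g a c"
proof -
  obtain t n where s: "s = (\<Sum>i<n. dist (g (t i)) (g (t (Suc i))))"
    and t: "t 0 = a" "t n = b" "\<forall>i<n. t i \<le> t (Suc i)"
    using polygon_sumsE[OF assms(1)] .
  define t' where "t' = (\<lambda>i. if i \<le> n then t i else c)"
  have "(\<Sum>i<Suc n. dist (g (t' i)) (g (t' (Suc i)))) = s + dist (g b) (g c)"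
    unfolding s t'_def using t by (auto intro!: sum.cong)
  moreover have "t' 0 = a" "t' (Suc n) = c" "\<forall>i<Suc n. t' i \<le> t' (Suc i)"
    using t assms(2) by (auto simp: t'_def less_Suc_eq)
  ultimately show ?thesis using polygon_sumsI[of t' a "Suc n" c g] by simp
qed

lemma polygon_sums_append:
  assumes s1: "s1 \<in> polygon_sums dist g a c" and s2: "s2 \<in> polygon_sums dist g c b"
  shows "s1 + s2 \<in> polygon_sums dist g a b"
proof -
  obtain t n where s: "s2 = (\<Sum>i<n. dist (g (t i)) (g (t (Suc i))))"
    and t: "t 0 = c" "t n = b" "\<forall>i<n. t i \<le> t (Suc i)"
    using polygon_sumsE[OF s2] .
  have "s1 + (\<Sum>i<m. dist (g (t i)) (g (t (Suc i)))) \<in> polygon_sums dist g a (t m)" if "m \<le> n" for m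
    using that
  proof (induction m)
    case 0
    then show ?case using s1 t by simp
  next
    case (Suc m)
    then have "s1 + (\<Sum>i<m. dist (g (t i)) (g (t (Suc i)))) + dist (g (t m)) (g (t (Suc m)))
        \<in> polygon_sums dist g a (t (Suc m))"
      using t(3) by (intro polygon_sums_snoc) auto
    then show ?case by (simp add: algebra_simps)
  qed
  then show ?thesis using s t by auto
qed

lemma partition_sum_split:
  assumes t: "t 0 = a" "\<forall>i<n. t i \<le> t (Suc i)" and c: "a \<le> c" "c \<le> t n"
  shows "\<exists>s1\<in>polygon_sums dist g a c. \<exists>s2\<in>polygon_sums dist g c (t n).
           (\<Sum>i<n. dist (g (t i)) (g (t (Suc i)))) \<le> s1 + s2"
  using t(2) c(2)
proof (induction n)
  case 0
  then have "c = a" using t c by simp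
  then show ?case using polygon_sums_single[of a a g] t by (intro bexI[of _ 0]) auto
next
  case (Suc n)
  let ?s = "\<Sum>i<n. dist (g (t i)) (g (t (Suc i)))"
  have mono: "t n \<le> t (Suc n)" using Suc.prems(1) by simp
  show ?case
  proof (cases "c \<le> t n")
    case True
    then obtain s1 s2 where s1: "s1 \<in> polygon_sums dist g a c"
      and s2: "s2 \<in> polygon_sums dist g c (t n)" and le: "?s \<le> s1 + s2"
      using Suc by auto
    have s2': "s2 + dist (g (t n)) (g (t (Suc n))) \<in> polygon_sums dist g c (t (Suc n))"
      by (rule polygon_sums_snoc[OF s2 mono])
    show ?thesis by (intro bexI[OF _ s1] bexI[OF _ s2']) (use le in simp)
  next
    case False
    have "?s \<in> polygon_sums dist g a (t n)"
      using polygon_sumsI[of t a n "t n" g] t(1) Suc.prems(1) by auto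
    then have s1: "?s + dist (g (t n)) (g c) \<in> polygon_sums dist g a c"
      by (rule polygon_sums_snoc) (use False in simp)
    have s2: "dist (g c) (g (t (Suc n))) \<in> polygon_sums dist g c (t (Suc n))"
      using polygon_sums_single Suc.prems(2) by blast
    have "dist (g (t n)) (g (t (Suc n))) \<le> dist (g (t n)) (g c) + dist (g c) (g (t (Suc n)))"
      by (rule dist_triangle)
    then show ?thesis by (intro bexI[OF _ s1] bexI[OF _ s2]) simp
  qed
qed

lemma polygon_sums_split:
  assumes "s \<in> polygon_sums dist g a b" "a \<le> c" "c \<le> b"
  obtains s1 s2 where "s1 \<in> polygon_sums dist g a c" "s2 \<in> polygon_sums dist g c b" "s \<le> s1 + s2"
proof -
  obtain t n where "s = (\<Sum>i<n. dist (g (t i)) (g (t (Suc i))))"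
    and t: "t 0 = a" "t n = b" "\<forall>i<n. t i \<le> t (Suc i)"
    using polygon_sumsE[OF assms(1)] .
  then show ?thesis using partition_sum_split[OF t(1,3), of c g] assms(2,3) that by auto
qed

lemma curve_len_refl: "curve_len dist g a a = 0"
  unfolding curve_len_def polygon_sums_refl by simp

lemma polygon_sums_le_curve_len:
  "bdd_above (polygon_sums dist g a b) \<Longrightarrow> s \<in> polygon_sums dist g a b \<Longrightarrow> s \<le> curve_len dist g a b"
  unfolding curve_len_def by (rule cSup_upper)

lemma dist_le_curve_len:
  "bdd_above (polygon_sums dist g a b) \<Longrightarrow> a \<le> b \<Longrightarrow> dist (g a) (g b) \<le> curve_len dist g a b"
  using polygon_sums_le_curve_len polygon_sums_single by blast

lemma curve_len_nonneg:
  "bdd_above (polygon_sums dist g a b) \<Longrightarrow> a \<le> b \<Longrightarrow> 0 \<le> curve_len dist g a b"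
  using dist_le_curve_len zero_le_dist order_trans by blast

lemma bdd_above_polygon_sums_subinterval:
  assumes "bdd_above (polygon_sums dist g a b)" "a \<le> c" "c \<le> b"
  shows "bdd_above (polygon_sums dist g a c)" "bdd_above (polygon_sums dist g c b)"
proof -
  from assms(1) obtain B where B: "\<And>s. s \<in> polygon_sums dist g a b \<Longrightarrow> s \<le> B"
    by (auto simp: bdd_above_def)
  show "bdd_above (polygon_sums dist g a c)"
  proof (rule bdd_aboveI)
    fix s assume "s \<in> polygon_sums dist g a c"
    then have "s + dist (g c) (g b) \<in> polygon_sums dist g a b"
      using polygon_sums_append polygon_sums_single assms by blast
    then show "s \<le> B" using B[of "s + dist (g c) (g b)"] zero_le_dist[of "g c" "g b"] by linarith
  qed
  show "bdd_above (polygon_sums dist g c b)"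
  proof (rule bdd_aboveI)
    fix s assume "s \<in> polygon_sums dist g c b"
    then have "dist (g a) (g c) + s \<in> polygon_sums dist g a b"
      using polygon_sums_append polygon_sums_single assms by blast
    then show "s \<le> B" using B[of "dist (g a) (g c) + s"] zero_le_dist[of "g a" "g c"] by linarith
  qed
qed

lemma bdd_above_polygon_sums_join:
  assumes "bdd_above (polygon_sums dist g a c)" "bdd_above (polygon_sums dist g c b)" "a \<le> c" "c \<le> b"
  shows "bdd_above (polygon_sums dist g a b)"
proof (rule bdd_aboveI)
  fix s assume "s \<in> polygon_sums dist g a b"
  then obtain s1 s2 where "s1 \<in> polygon_sums dist g a c" "s2 \<in> polygon_sums dist g c b" "s \<le> s1 + s2"
    using polygon_sums_split assms by metis
  then show "s \<le> curve_len dist g a c + curve_len dist g c b"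
    using polygon_sums_le_curve_len[OF assms(1)] polygon_sums_le_curve_len[OF assms(2)] by fastforce
qed

lemma curve_len_split:
  assumes bdd: "bdd_above (polygon_sums dist g a b)" and "a \<le> c" "c \<le> b"
  shows "curve_len dist g a b = curve_len dist g a c + curve_len dist g c b"
proof -
  note bdd_ac = bdd_above_polygon_sums_subinterval(1)[OF assms]
    and bdd_cb = bdd_above_polygon_sums_subinterval(2)[OF assms]
  have ne: "polygon_sums dist g u v \<noteq> {}" if "u \<le> v" for u v
    using polygon_sums_single[OF that] by blast
  have "curve_len dist g a b \<le> curve_len dist g a c + curve_len dist g c b"
    unfolding curve_len_def[of _ _ a b]
  proof (rule cSup_least)
    show "polygon_sums dist g a b \<noteq> {}" using ne assms by simp
    fix s assume "s \<in> polygon_sums dist g a b"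
    then obtain s1 s2 where "s1 \<in> polygon_sums dist g a c" "s2 \<in> polygon_sums dist g c b" "s \<le> s1 + s2"
      using polygon_sums_split assms by metis
    then show "s \<le> curve_len dist g a c + curve_len dist g c b"
      using polygon_sums_le_curve_len[OF bdd_ac] polygon_sums_le_curve_len[OF bdd_cb] by fastforce
  qed
  moreover have le_diff: "curve_len dist g a c \<le> curve_len dist g a b - s2"
    if s2: "s2 \<in> polygon_sums dist g c b" for s2
    unfolding curve_len_def[of _ _ a c]
  proof (rule cSup_least)
    show "polygon_sums dist g a c \<noteq> {}" using ne assms by simp
    fix s1 assume "s1 \<in> polygon_sums dist g a c"
    then have "s1 + s2 \<in> polygon_sums dist g a b" using polygon_sums_append s2 by blast
    then show "s1 \<le> curve_len dist g a b - s2" using polygon_sums_le_curve_len[OF bdd] by fastforce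
  qed
  moreover have "curve_len dist g c b \<le> curve_len dist g a b - curve_len dist g a c"
    unfolding curve_len_def[of _ _ c b]
  proof (rule cSup_least)
    show "polygon_sums dist g c b \<noteq> {}" using ne assms by simp
    fix s2 assume "s2 \<in> polygon_sums dist g c b"
    then show "s2 \<le> curve_len dist g a b - curve_len dist g a c" using le_diff[of s2] by linarith
  qed
  ultimately show ?thesis by simp
qed

lemma curve_len_mono:
  assumes "bdd_above (polygon_sums dist g a b)" "a \<le> t1" "t1 \<le> t2" "t2 \<le> b"
  shows "curve_len dist g a t1 \<le> curve_len dist g a t2"
proof -
  have bdd: "bdd_above (polygon_sums dist g a t2)"
    using bdd_above_polygon_sums_subinterval(1) assms by (meson order_trans)
  then have "curve_len dist g a t2 = curve_len dist g a t1 + curve_len dist g t1 t2"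
    using curve_len_split assms by auto
  moreover have "0 \<le> curve_len dist g t1 t2"
    using bdd_above_polygon_sums_subinterval(2)[OF bdd] curve_len_nonneg assms by auto
  ultimately show ?thesis by simp
qed

lemma rectifiable_iff:
  "rectifiable dist g a b \<longleftrightarrow> a \<le> b \<and> continuous_on {a..b} g \<and> bdd_above (polygon_sums dist g a b)"
proof -
  have "curve_cont dist g a b \<longleftrightarrow> continuous_on {a..b} g"
    unfolding curve_cont_def continuous_on_iff dist_real_def by auto
  then show ?thesis unfolding rectifiable_def by simp
qed

lemma
  assumes "rectifiable dist g a b"
  shows rectifiable_le: "a \<le> b"
    and rectifiable_continuous_on: "continuous_on {a..b} g"
    and rectifiable_bdd_above: "bdd_above (polygon_sums dist g a b)"
  using assms unfolding rectifiable_iff by auto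

lemma curve_len_rectifiable_nonneg: "rectifiable dist g a b \<Longrightarrow> 0 \<le> curve_len dist g a b"
  by (rule curve_len_nonneg[OF rectifiable_bdd_above rectifiable_le])

lemma partition_sum_split_in_last_segment:
  assumes "t 0 = a" "\<forall>i<n. t i \<le> t (Suc i)" "a \<le> c" "c \<le> t n" "\<forall>i\<le>n. t i \<le> c \<or> t i = t n"
  shows "\<exists>s1\<in>polygon_sums dist g a c.
           (\<Sum>i<n. dist (g (t i)) (g (t (Suc i)))) \<le> s1 + dist (g c) (g (t n))"
  using assms(2-5)
proof (induction n)
  case 0
  then show ?case using polygon_sums_refl assms(1) by auto
next
  case (Suc n)
  let ?s = "\<Sum>i<n. dist (g (t i)) (g (t (Suc i)))"
  show ?case
  proof (cases "t n = t (Suc n)")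
    case True
    then show ?thesis using Suc by auto
  next
    case False
    then have "t n \<le> c" using Suc.prems(4)[rule_format, of n] by auto
    moreover have "?s \<in> polygon_sums dist g a (t n)"
      using polygon_sumsI[of t a n "t n" g] assms(1) Suc.prems(1) by simp
    ultimately have "?s + dist (g (t n)) (g c) \<in> polygon_sums dist g a c"
      using polygon_sums_snoc by blast
    moreover have "dist (g (t n)) (g (t (Suc n))) \<le> dist (g (t n)) (g c) + dist (g c) (g (t (Suc n)))"
      by (rule dist_triangle)
    ultimately show ?thesis by (intro bexI) auto
  qed
qed

lemma partition_sum_split_in_first_segment:
  assumes "t 0 = a" "\<forall>i<n. t i \<le> t (Suc i)" "a \<le> c" "c \<le> t n" "\<forall>i\<le>n. t i = a \<or> c \<le> t i"
  shows "\<exists>s2\<in>polygon_sums dist g c (t n).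
           (\<Sum>i<n. dist (g (t i)) (g (t (Suc i)))) \<le> dist (g a) (g c) + s2"
  using assms(2-5)
proof (induction n)
  case 0
  then show ?case using polygon_sums_refl assms(1) by auto
next
  case (Suc n)
  let ?s = "\<Sum>i<n. dist (g (t i)) (g (t (Suc i)))"
  have mono: "t n \<le> t (Suc n)" using Suc.prems by simp
  show ?case
  proof (cases "c \<le> t n")
    case True
    then obtain s2 where "s2 \<in> polygon_sums dist g c (t n)" "?s \<le> dist (g a) (g c) + s2"
      using Suc by auto
    then show ?thesis using polygon_sums_snoc[OF _ mono] by (intro bexI) auto
  next
    case False
    then have tn: "t n = a" using Suc.prems(4)[rule_format, of n] by auto
    have "?s \<in> polygon_sums dist g a a"
      using polygon_sumsI[of t a n "t n" g] assms(1) Suc.prems(1) tn by simp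
    then have "?s = 0" by (simp add: polygon_sums_refl)
    moreover have "dist (g (t n)) (g (t (Suc n))) \<le> dist (g a) (g c) + dist (g c) (g (t (Suc n)))"
      using tn dist_triangle by metis
    moreover have "dist (g c) (g (t (Suc n))) \<in> polygon_sums dist g c (t (Suc n))"
      using polygon_sums_single Suc.prems by blast
    ultimately show ?thesis by (intro bexI) auto
  qed
qed

lemma polygon_sums_le_curve_len_left:
  assumes bdd: "bdd_above (polygon_sums dist g a t0)" and s: "s \<in> polygon_sums dist g a t0"
    and "a < t0"
  obtains c where "a \<le> c" "c < t0"
    "\<And>t. c < t \<Longrightarrow> t \<le> t0 \<Longrightarrow> s \<le> curve_len dist g a t + dist (g t) (g t0)"
proof -
  obtain p n where sp: "s = (\<Sum>i<n. dist (g (p i)) (g (p (Suc i))))"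
    and p: "p 0 = a" "p n = t0" "\<forall>i<n. p i \<le> p (Suc i)"
    using polygon_sumsE[OF s] .
  define C where "C = p ` {i. i \<le> n \<and> p i < t0}"
  have "finite C" "a \<in> C" unfolding C_def using p \<open>a < t0\<close> by (auto intro!: image_eqI[of _ _ 0])
  then have "a \<le> Max C" "Max C < t0" by (simp, subst Max_less_iff) (auto simp: C_def)
  moreover have "s \<le> curve_len dist g a t + dist (g t) (g t0)" if t: "Max C < t" "t \<le> t0" for t
  proof -
    have "p i \<le> t \<or> p i = p n" if "i \<le> n" for i
    proof (cases "p i < t0")
      case True
      then have "p i \<le> Max C" using \<open>finite C\<close> that unfolding C_def by (intro Max_ge) auto
      then show ?thesis using t by linarith
    next
      case False
      then show ?thesis using partition_in_interval[OF p that] p(2) by auto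
    qed
    then obtain s1 where "s1 \<in> polygon_sums dist g a t" "s \<le> s1 + dist (g t) (g t0)"
      using partition_sum_split_in_last_segment[OF p(1) p(3), of t g] t \<open>a \<le> Max C\<close> p sp by auto
    moreover have "bdd_above (polygon_sums dist g a t)"
      using bdd_above_polygon_sums_subinterval(1)[OF bdd] t \<open>a \<le> Max C\<close> by auto
    ultimately show ?thesis using polygon_sums_le_curve_len by fastforce
  qed
  ultimately show ?thesis using that by blast
qed

lemma polygon_sums_le_curve_len_right:
  assumes bdd: "bdd_above (polygon_sums dist g t0 b)" and s: "s \<in> polygon_sums dist g t0 b"
    and "t0 < b"
  obtains c where "c \<le> b" "t0 < c"
    "\<And>t. t0 \<le> t \<Longrightarrow> t < c \<Longrightarrow> s \<le> dist (g t0) (g t) + curve_len dist g t b"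
proof -
  obtain p n where sp: "s = (\<Sum>i<n. dist (g (p i)) (g (p (Suc i))))"
    and p: "p 0 = t0" "p n = b" "\<forall>i<n. p i \<le> p (Suc i)"
    using polygon_sumsE[OF s] .
  define C where "C = p ` {i. i \<le> n \<and> t0 < p i}"
  have "finite C" "b \<in> C" unfolding C_def using p \<open>t0 < b\<close> by (auto intro!: image_eqI[of _ _ n])
  then have "Min C \<le> b" "t0 < Min C" by (simp, subst Min_gr_iff) (auto simp: C_def)
  moreover have "s \<le> dist (g t0) (g t) + curve_len dist g t b" if t: "t0 \<le> t" "t < Min C" for t
  proof -
    have "p i = t0 \<or> t \<le> p i" if "i \<le> n" for i
    proof (cases "t0 < p i")
      case True
      then have "Min C \<le> p i" using \<open>finite C\<close> that unfolding C_def by (intro Min_le) auto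
      then show ?thesis using t by linarith
    next
      case False
      then show ?thesis using partition_in_interval[OF p that] p(1) by auto
    qed
    then obtain s2 where "s2 \<in> polygon_sums dist g t b" "s \<le> dist (g t0) (g t) + s2"
      using partition_sum_split_in_first_segment[OF p(1) p(3), of t g] t \<open>Min C \<le> b\<close> p sp by auto
    moreover have "bdd_above (polygon_sums dist g t b)"
      using bdd_above_polygon_sums_subinterval(2)[OF bdd] t \<open>Min C \<le> b\<close> by auto
    ultimately show ?thesis using polygon_sums_le_curve_len by fastforce
  qed
  ultimately show ?thesis using that by blast
qed

lemma curve_len_continuous_from_left:
  assumes r: "rectifiable dist g a b" and t0: "a \<le> t0" "t0 \<le> b" and e: "0 < e"
  shows "\<exists>d>0. \<forall>t. a \<le> t \<and> t \<le> t0 \<and> t0 - d < t \<longrightarrow>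
           curve_len dist g a t0 - curve_len dist g a t < e"
proof (cases "t0 = a")
  case True
  then show ?thesis using e by (intro exI[of _ 1]) auto
next
  case False
  note bdd = rectifiable_bdd_above[OF r]
  have bdd0: "bdd_above (polygon_sums dist g a t0)"
    using bdd_above_polygon_sums_subinterval(1)[OF bdd] t0 by auto
  have "curve_len dist g a t0 - e/2 < Sup (polygon_sums dist g a t0)"
    using e unfolding curve_len_def by simp
  then obtain s where s: "s \<in> polygon_sums dist g a t0" "curve_len dist g a t0 - e/2 < s"
    using less_cSupE polygon_sums_single[of a t0 g] t0 by blast
  obtain c where c: "a \<le> c" "c < t0"
    and sc: "\<And>t. c < t \<Longrightarrow> t \<le> t0 \<Longrightarrow> s \<le> curve_len dist g a t + dist (g t) (g t0)"
    using polygon_sums_le_curve_len_left[OF bdd0 s(1)] t0 False by (metis order_le_neq_trans)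
  have "t0 \<in> {a..b}" "0 < e/2" using t0 e by auto
  then have "\<exists>k>0. \<forall>t\<in>{a..b}. dist t t0 < k \<longrightarrow> dist (g t) (g t0) < e/2"
    using rectifiable_continuous_on[OF r] unfolding continuous_on_iff by blast
  then obtain k where k: "k > 0" "\<And>t. t \<in> {a..b} \<Longrightarrow> dist t t0 < k \<Longrightarrow> dist (g t) (g t0) < e/2"
    by blast
  show ?thesis
  proof (intro exI[of _ "min (t0 - c) k"] conjI allI impI)
    fix t assume t: "a \<le> t \<and> t \<le> t0 \<and> t0 - min (t0 - c) k < t"
    then have "dist (g t) (g t0) < e/2" using k(2)[of t] t0 by (auto simp: dist_real_def)
    moreover have "c < t" using t min.cobounded1[of "t0 - c" k] by linarith
    ultimately show "curve_len dist g a t0 - curve_len dist g a t < e" using sc[of t] s t by linarith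
  qed (use c k in simp)
qed

lemma curve_len_continuous_from_right:
  assumes r: "rectifiable dist g a b" and t0: "a \<le> t0" "t0 \<le> b" and e: "0 < e"
  shows "\<exists>d>0. \<forall>t. t0 \<le> t \<and> t \<le> b \<and> t < t0 + d \<longrightarrow>
           curve_len dist g a t - curve_len dist g a t0 < e"
proof (cases "t0 = b")
  case True
  then show ?thesis using e by (intro exI[of _ 1]) auto
next
  case False
  note bdd = rectifiable_bdd_above[OF r]
  have bdd0: "bdd_above (polygon_sums dist g t0 b)"
    using bdd_above_polygon_sums_subinterval(2)[OF bdd] t0 by auto
  have "curve_len dist g t0 b - e/2 < Sup (polygon_sums dist g t0 b)"
    using e unfolding curve_len_def by simp
  then obtain s where s: "s \<in> polygon_sums dist g t0 b" "curve_len dist g t0 b - e/2 < s"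
    using less_cSupE polygon_sums_single[of t0 b g] t0 by blast
  obtain c where c: "c \<le> b" "t0 < c"
    and sc: "\<And>t. t0 \<le> t \<Longrightarrow> t < c \<Longrightarrow> s \<le> dist (g t0) (g t) + curve_len dist g t b"
    using polygon_sums_le_curve_len_right[OF bdd0 s(1)] t0 False by (metis order_le_neq_trans)
  have "t0 \<in> {a..b}" "0 < e/2" using t0 e by auto
  then have "\<exists>k>0. \<forall>t\<in>{a..b}. dist t t0 < k \<longrightarrow> dist (g t) (g t0) < e/2"
    using rectifiable_continuous_on[OF r] unfolding continuous_on_iff by blast
  then obtain k where k: "k > 0" "\<And>t. t \<in> {a..b} \<Longrightarrow> dist t t0 < k \<Longrightarrow> dist (g t) (g t0) < e/2"
    by blast
  show ?thesis
  proof (intro exI[of _ "min (c - t0) k"] conjI allI impI)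
    fix t assume t: "t0 \<le> t \<and> t \<le> b \<and> t < t0 + min (c - t0) k"
    then have "dist (g t0) (g t) < e/2" using k(2)[of t] t0 by (auto simp: dist_real_def dist_commute)
    moreover have "curve_len dist g t0 b = curve_len dist g t0 t + curve_len dist g t b"
      using curve_len_split[OF bdd0, of t] t by simp
    moreover have "curve_len dist g a t = curve_len dist g a t0 + curve_len dist g t0 t"
      using curve_len_split[OF bdd_above_polygon_sums_subinterval(1)[OF bdd, of t], of t0] t t0 by simp
    moreover have "t < c" using t min.cobounded1[of "c - t0" k] by linarith
    ultimately show "curve_len dist g a t - curve_len dist g a t0 < e" using sc[of t] s t by linarith
  qed (use c k in simp)
qed

lemma continuous_on_curve_len:
  assumes r: "rectifiable dist g a b"
  shows "continuous_on {a..b} (curve_len dist g a)"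
  unfolding continuous_on_iff
proof (intro ballI allI impI)
  fix t0 e assume t0: "t0 \<in> {a..b}" and e: "(0::real) < e"
  note bdd = rectifiable_bdd_above[OF r]
  obtain d1 where d1: "d1 > 0"
    "\<forall>t. a \<le> t \<and> t \<le> t0 \<and> t0 - d1 < t \<longrightarrow> curve_len dist g a t0 - curve_len dist g a t < e"
    using curve_len_continuous_from_left[OF r _ _ e, of t0] t0 by auto
  obtain d2 where d2: "d2 > 0"
    "\<forall>t. t0 \<le> t \<and> t \<le> b \<and> t < t0 + d2 \<longrightarrow> curve_len dist g a t - curve_len dist g a t0 < e"
    using curve_len_continuous_from_right[OF r _ _ e, of t0] t0 by auto
  show "\<exists>d>0. \<forall>t\<in>{a..b}. dist t t0 < d \<longrightarrow> dist (curve_len dist g a t) (curve_len dist g a t0) < e"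
  proof (intro exI[of _ "min d1 d2"] conjI ballI impI)
    fix t assume t: "t \<in> {a..b}" "dist t t0 < min d1 d2"
    show "dist (curve_len dist g a t) (curve_len dist g a t0) < e"
    proof (cases "t \<le> t0")
      case True
      then have "curve_len dist g a t \<le> curve_len dist g a t0" using curve_len_mono[OF bdd] t t0 by auto
      then show ?thesis using d1(2)[rule_format, of t] t True by (auto simp: dist_real_def)
    next
      case False
      then have "curve_len dist g a t0 \<le> curve_len dist g a t" using curve_len_mono[OF bdd] t t0 by auto
      then show ?thesis using d2(2)[rule_format, of t] t False by (auto simp: dist_real_def)
    qed
  qed (use d1 d2 in simp)
qed

section \<open>Arc-length parametrisation and line integrals\<close>

definition arclength_reparam :: "(real \<Rightarrow> 'a::metric_space) \<Rightarrow> real \<Rightarrow> real \<Rightarrow> real \<Rightarrow> 'a" where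
  "arclength_reparam g a b s = g (SOME t. t \<in> {a..b} \<and> curve_len dist g a t = s)"

lemma line_integral_arclength_reparam:
  "line_integral \<rho> g a b = integral {0..curve_len dist g a b} (\<lambda>s. \<rho> (arclength_reparam g a b s))"
  unfolding line_integral_def arclength_reparam_def by simp

lemma curve_len_attains:
  assumes r: "rectifiable dist g a b" and "0 \<le> s" "s \<le> curve_len dist g a b"
  shows "\<exists>t\<in>{a..b}. curve_len dist g a t = s"
  using IVT'[of "curve_len dist g a" a s b] continuous_on_curve_len[OF r] rectifiable_le[OF r] assms(2,3)
  by (auto simp: curve_len_refl)

lemma dist_le_curve_len_diff:
  assumes r: "rectifiable dist g a b" and t: "t1 \<in> {a..b}" "t2 \<in> {a..b}" "t1 \<le> t2"
  shows "dist (g t1) (g t2) \<le> curve_len dist g a t2 - curve_len dist g a t1"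
proof -
  have bdd: "bdd_above (polygon_sums dist g a t2)"
    using bdd_above_polygon_sums_subinterval(1)[OF rectifiable_bdd_above[OF r], of t2] t by auto
  then have "curve_len dist g a t2 = curve_len dist g a t1 + curve_len dist g t1 t2"
    using curve_len_split t by auto
  moreover have "dist (g t1) (g t2) \<le> curve_len dist g t1 t2"
    using dist_le_curve_len bdd_above_polygon_sums_subinterval(2)[OF bdd, of t1] t by auto
  ultimately show ?thesis by simp
qed

lemma dist_le_abs_curve_len_diff:
  assumes r: "rectifiable dist g a b" and t: "t1 \<in> {a..b}" "t2 \<in> {a..b}"
  shows "dist (g t1) (g t2) \<le> \<bar>curve_len dist g a t1 - curve_len dist g a t2\<bar>"
  using dist_le_curve_len_diff[OF r t] dist_le_curve_len_diff[OF r t(2,1)]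
  by (cases "t1 \<le> t2") (auto simp: dist_commute)

lemma arclength_reparam_eq:
  assumes r: "rectifiable dist g a b" and t: "t \<in> {a..b}" "curve_len dist g a t = s"
  shows "arclength_reparam g a b s = g t"
proof -
  let ?t = "SOME t. t \<in> {a..b} \<and> curve_len dist g a t = s"
  have "\<exists>t. t \<in> {a..b} \<and> curve_len dist g a t = s" using t by blast
  then have "?t \<in> {a..b} \<and> curve_len dist g a ?t = s" by (rule someI_ex)
  then have "dist (g ?t) (g t) = 0" using dist_le_abs_curve_len_diff[OF r, of ?t t] t by simp
  then show ?thesis unfolding arclength_reparam_def by simp
qed

lemma arclength_reparamE:
  assumes r: "rectifiable dist g a b" and s: "s \<in> {0..curve_len dist g a b}"
  obtains t where "t \<in> {a..b}" "curve_len dist g a t = s" "arclength_reparam g a b s = g t"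
proof -
  have "\<exists>t\<in>{a..b}. curve_len dist g a t = s" using curve_len_attains[OF r, of s] s by simp
  then obtain t where "t \<in> {a..b}" "curve_len dist g a t = s" by blast
  then show ?thesis using that arclength_reparam_eq[OF r] by blast
qed

lemma arclength_reparam_lipschitz:
  assumes r: "rectifiable dist g a b"
    and s: "s1 \<in> {0..curve_len dist g a b}" "s2 \<in> {0..curve_len dist g a b}"
  shows "dist (arclength_reparam g a b s1) (arclength_reparam g a b s2) \<le> \<bar>s1 - s2\<bar>"
proof -
  obtain t1 where t1: "t1 \<in> {a..b}" "curve_len dist g a t1 = s1" "arclength_reparam g a b s1 = g t1"
    using arclength_reparamE[OF r s(1)] .
  obtain t2 where t2: "t2 \<in> {a..b}" "curve_len dist g a t2 = s2" "arclength_reparam g a b s2 = g t2"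
    using arclength_reparamE[OF r s(2)] .
  show ?thesis using dist_le_abs_curve_len_diff[OF r t1(1) t2(1)] t1 t2 by simp
qed

lemma arclength_reparam_start: "rectifiable dist g a b \<Longrightarrow> arclength_reparam g a b 0 = g a"
  using arclength_reparam_eq[of g a b a 0] rectifiable_le by (auto simp: curve_len_refl)

lemma arclength_reparam_end:
  "rectifiable dist g a b \<Longrightarrow> arclength_reparam g a b (curve_len dist g a b) = g b"
  using arclength_reparam_eq[of g a b b] rectifiable_le by auto

lemma continuous_on_arclength_reparam:
  assumes r: "rectifiable dist g a b"
  shows "continuous_on {0..curve_len dist g a b} (arclength_reparam g a b)"
  unfolding continuous_on_iff
proof (intro ballI allI impI)
  fix s e assume s: "s \<in> {0..curve_len dist g a b}" and e: "(0::real) < e"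
  show "\<exists>d>0. \<forall>s'\<in>{0..curve_len dist g a b}. dist s' s < d \<longrightarrow>
          dist (arclength_reparam g a b s') (arclength_reparam g a b s) < e"
  proof (intro exI[of _ e] conjI ballI impI)
    fix s' assume "s' \<in> {0..curve_len dist g a b}" "dist s' s < e"
    then show "dist (arclength_reparam g a b s') (arclength_reparam g a b s) < e"
      using arclength_reparam_lipschitz[OF r _ s, of s'] by (simp add: dist_real_def)
  qed (rule e)
qed

lemma integrable_on_arclength_reparam:
  fixes \<rho> :: "'a::metric_space \<Rightarrow> real"
  assumes r: "rectifiable dist g a b" and "continuous_on UNIV \<rho>"
  shows "(\<lambda>s. \<rho> (arclength_reparam g a b s)) integrable_on {0..curve_len dist g a b}"
  by (intro integrable_continuous_real continuous_on_compose2[OF assms(2)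
        continuous_on_arclength_reparam[OF r]]) auto

lemma rectifiable_subinterval:
  assumes r: "rectifiable dist g a b" and t: "t \<in> {a..b}"
  shows "rectifiable dist g a t"
  using bdd_above_polygon_sums_subinterval(1)[OF rectifiable_bdd_above[OF r], of t]
    continuous_on_subset[OF rectifiable_continuous_on[OF r], of "{a..t}"] t
  unfolding rectifiable_iff by simp

lemma arclength_reparam_subinterval:
  assumes r: "rectifiable dist g a b" and t: "t \<in> {a..b}" and s: "s \<in> {0..curve_len dist g a t}"
  shows "arclength_reparam g a t s = arclength_reparam g a b s"
proof -
  obtain t' where "t' \<in> {a..t}" "curve_len dist g a t' = s" "arclength_reparam g a t s = g t'"
    using arclength_reparamE[OF rectifiable_subinterval[OF r t] s] .
  then show ?thesis using arclength_reparam_eq[OF r, of t' s] t by auto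
qed

lemma line_integral_mono_subinterval:
  fixes \<rho> :: "'a::metric_space \<Rightarrow> real"
  assumes r: "rectifiable dist g a b" and t: "t \<in> {a..b}"
    and \<rho>: "continuous_on UNIV \<rho>" "\<And>x. 0 \<le> \<rho> x"
  shows "line_integral \<rho> g a t \<le> line_integral \<rho> g a b"
proof -
  let ?f = "\<lambda>s. \<rho> (arclength_reparam g a b s)"
  let ?L = "curve_len dist g a"
  have L: "0 \<le> ?L t" "?L t \<le> ?L b"
    using curve_len_rectifiable_nonneg[OF rectifiable_subinterval[OF r t]]
      curve_len_mono[OF rectifiable_bdd_above[OF r], of t b] t rectifiable_le[OF r] by auto
  have "line_integral \<rho> g a t = integral {0..?L t} ?f"
    unfolding line_integral_arclength_reparam using arclength_reparam_subinterval[OF r t]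
    by (intro integral_cong) auto
  also have "\<dots> \<le> integral {0..?L t} ?f + integral {?L t..?L b} ?f"
  proof -
    have "?f integrable_on {?L t..?L b}"
      using integrable_on_subinterval[OF integrable_on_arclength_reparam[OF r \<rho>(1)]] L by simp
    then have "0 \<le> integral {?L t..?L b} ?f" by (rule integral_nonneg) (rule \<rho>(2))
    then show ?thesis by simp
  qed
  also have "\<dots> = line_integral \<rho> g a b"
    unfolding line_integral_arclength_reparam
    using Henstock_Kurzweil_Integration.integral_combine[OF L integrable_on_arclength_reparam[OF r \<rho>(1)]] .
  finally show ?thesis .
qed

section \<open>Isometric curves and concatenation\<close>

lemma polygon_sums_isometric:
  assumes iso: "\<forall>s\<in>{a..b}. \<forall>t\<in>{a..b}. dist (g s) (g t) = \<bar>s - t\<bar>" and t: "a \<le> t" "t \<le> b"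
  shows "polygon_sums dist g a t = {t - a}"
proof -
  have "x = t - a" if x: "x \<in> polygon_sums dist g a t" for x
  proof -
    obtain p n where x_eq: "x = (\<Sum>i<n. dist (g (p i)) (g (p (Suc i))))"
      and p: "p 0 = a" "p n = t" "\<forall>i<n. p i \<le> p (Suc i)"
      using polygon_sumsE[OF x] .
    have "dist (g (p i)) (g (p (Suc i))) = p (Suc i) - p i" if "i < n" for i
      using iso partition_in_interval[OF p, of i] partition_in_interval[OF p, of "Suc i"] p(3) t that
      by auto
    then have "x = (\<Sum>i<n. p (Suc i) - p i)" unfolding x_eq by (intro sum.cong) auto
    then show ?thesis using sum_lessThan_telescope[of p n] p by simp
  qed
  moreover have "t - a \<in> polygon_sums dist g a t"
    using polygon_sums_single[of a t g] iso t by simp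
  ultimately show ?thesis by blast
qed

lemma
  fixes \<rho> :: "'a::metric_space \<Rightarrow> real"
  assumes iso: "\<forall>s\<in>{a..b}. \<forall>t\<in>{a..b}. dist (g s) (g t) = \<bar>s - t\<bar>" and "a \<le> b"
  shows rectifiable_isometric: "rectifiable dist g a b"
    and line_integral_isometric: "line_integral \<rho> g a b = integral {0..b - a} (\<lambda>s. \<rho> (g (a + s)))"
proof -
  have len: "curve_len dist g a t = t - a" if "t \<in> {a..b}" for t
    unfolding curve_len_def using polygon_sums_isometric[OF iso] that by simp
  have "continuous_on {a..b} g"
    unfolding continuous_on_iff using iso by (metis dist_real_def)
  then show r: "rectifiable dist g a b"
    unfolding rectifiable_iff using polygon_sums_isometric[OF iso, of b] \<open>a \<le> b\<close> by simp
  have "arclength_reparam g a b s = g (a + s)" if "s \<in> {0..b - a}" for s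
    using arclength_reparam_eq[OF r, of "a + s" s] len[of "a + s"] that by simp
  moreover have "curve_len dist g a b = b - a" using len \<open>a \<le> b\<close> by simp
  ultimately show "line_integral \<rho> g a b = integral {0..b - a} (\<lambda>s. \<rho> (g (a + s)))"
    unfolding line_integral_arclength_reparam by (auto intro: integral_cong)
qed

lemma polygon_sums_cong:
  assumes "\<forall>t\<in>{a..b}. g t = h t"
  shows "polygon_sums dist g a b = polygon_sums dist h a b"
proof -
  have "polygon_sums dist g a b \<subseteq> polygon_sums dist h a b"
    if eq: "\<forall>t\<in>{a..b}. g t = h t" for g h :: "real \<Rightarrow> 'a"
  proof
    fix x assume "x \<in> polygon_sums dist g a b"
    then obtain p n where x_eq: "x = (\<Sum>i<n. dist (g (p i)) (g (p (Suc i))))"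
      and p: "p 0 = a" "p n = b" "\<forall>i<n. p i \<le> p (Suc i)"
      by (rule polygon_sumsE)
    have "x = (\<Sum>i<n. dist (h (p i)) (h (p (Suc i))))"
      unfolding x_eq using eq partition_in_interval[OF p] by (intro sum.cong) auto
    then show "x \<in> polygon_sums dist h a b" using polygon_sumsI[OF p] by simp
  qed
  then show ?thesis using assms by (metis antisym)
qed

lemma polygon_sums_shift: "polygon_sums dist (\<lambda>t. g (t + k)) a b = polygon_sums dist g (a + k) (b + k)"
proof -
  have shift: "polygon_sums dist (\<lambda>t. g (t + k)) a b \<subseteq> polygon_sums dist g (a + k) (b + k)"
    for g :: "real \<Rightarrow> 'a" and k a b
  proof
    fix x assume "x \<in> polygon_sums dist (\<lambda>t. g (t + k)) a b"
    then obtain p n where "x = (\<Sum>i<n. dist (g (p i + k)) (g (p (Suc i) + k)))"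
      "p 0 = a" "p n = b" "\<forall>i<n. p i \<le> p (Suc i)"
      by (rule polygon_sumsE)
    then show "x \<in> polygon_sums dist g (a + k) (b + k)"
      using polygon_sumsI[of "\<lambda>i. p i + k" "a + k" n "b + k" g] by simp
  qed
  show ?thesis
    using shift[of g k a b] shift[of "\<lambda>t. g (t + k)" "- k" "a + k" "b + k"] by simp
qed

definition curve_join :: "(real \<Rightarrow> 'a) \<Rightarrow> real \<Rightarrow> (real \<Rightarrow> 'a) \<Rightarrow> real \<Rightarrow> real \<Rightarrow> 'a" where
  "curve_join g1 b g2 c t = (if t \<le> b then g1 t else g2 (t + (c - b)))"

context
  fixes g1 g2 :: "real \<Rightarrow> 'a::metric_space" and a b c d :: real
  assumes r1: "rectifiable dist g1 a b" and r2: "rectifiable dist g2 c d" and joint: "g1 b = g2 c"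
begin

lemma
  shows curve_join_left: "\<forall>t\<in>{a..b}. curve_join g1 b g2 c t = g1 t"
    and curve_join_right: "\<forall>t\<in>{b..b + (d - c)}. curve_join g1 b g2 c t = g2 (t + (c - b))"
  unfolding curve_join_def using joint by auto

lemma polygon_sums_curve_join_right:
  assumes "t \<in> {b..b + (d - c)}"
  shows "polygon_sums dist (curve_join g1 b g2 c) b t = polygon_sums dist g2 c (t + (c - b))"
proof -
  have "polygon_sums dist (curve_join g1 b g2 c) b t = polygon_sums dist (\<lambda>t. g2 (t + (c - b))) b t"
    using curve_join_right assms by (intro polygon_sums_cong) auto
  then show ?thesis using polygon_sums_shift[of g2 "c - b" b t] by simp
qed

lemma rectifiable_curve_join: "rectifiable dist (curve_join g1 b g2 c) a (b + (d - c))"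
proof -
  let ?h = "curve_join g1 b g2 c" and ?e = "b + (d - c)"
  have ab: "a \<le> b" and be: "b \<le> ?e" using rectifiable_le r1 r2 by auto
  have "bdd_above (polygon_sums dist ?h a b)"
    using polygon_sums_cong[of a b ?h g1] curve_join_left rectifiable_bdd_above[OF r1] by simp
  moreover have "bdd_above (polygon_sums dist ?h b ?e)"
    using polygon_sums_curve_join_right[of ?e] be rectifiable_bdd_above[OF r2] by simp
  ultimately have "bdd_above (polygon_sums dist ?h a ?e)"
    by (rule bdd_above_polygon_sums_join[OF _ _ ab be])
  moreover have "continuous_on {a..b} ?h"
    using continuous_on_cong[of "{a..b}" "{a..b}" ?h g1] curve_join_left rectifiable_continuous_on[OF r1]
    by simp
  moreover have "continuous_on {b..?e} ?h"
  proof -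
    have "continuous_on {b..?e} (\<lambda>t. g2 (t + (c - b)))"
      by (intro continuous_on_compose2[OF rectifiable_continuous_on[OF r2]] continuous_intros) auto
    then show ?thesis using continuous_on_cong[of "{b..?e}" "{b..?e}" ?h] curve_join_right by simp
  qed
  ultimately show ?thesis
    unfolding rectifiable_iff using continuous_on_closed_Un[of "{a..b}" "{b..?e}" ?h]
      ivl_disj_un_two_touch(4)[OF ab be] ab be by auto
qed

lemma curve_len_curve_join_left:
  assumes "t \<in> {a..b}"
  shows "curve_len dist (curve_join g1 b g2 c) a t = curve_len dist g1 a t"
proof -
  have "polygon_sums dist (curve_join g1 b g2 c) a t = polygon_sums dist g1 a t"
    using curve_join_left assms by (intro polygon_sums_cong) auto
  then show ?thesis unfolding curve_len_def by simp
qed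

lemma curve_len_curve_join_right:
  assumes t: "t \<in> {b..b + (d - c)}"
  shows "curve_len dist (curve_join g1 b g2 c) a t
    = curve_len dist g1 a b + curve_len dist g2 c (t + (c - b))"
proof -
  have ab: "a \<le> b" using rectifiable_le[OF r1] .
  then have "t \<in> {a..b + (d - c)}" using t by simp
  then have "bdd_above (polygon_sums dist (curve_join g1 b g2 c) a t)"
    by (rule rectifiable_bdd_above[OF rectifiable_subinterval[OF rectifiable_curve_join]])
  then have "curve_len dist (curve_join g1 b g2 c) a t
      = curve_len dist (curve_join g1 b g2 c) a b + curve_len dist (curve_join g1 b g2 c) b t"
    using ab t by (intro curve_len_split) auto
  moreover have "curve_len dist (curve_join g1 b g2 c) b t = curve_len dist g2 c (t + (c - b))"
    unfolding curve_len_def using polygon_sums_curve_join_right[OF t] by simp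
  ultimately show ?thesis using curve_len_curve_join_left[of b] ab by simp
qed

lemma arclength_reparam_curve_join_left:
  assumes s: "s \<in> {0..curve_len dist g1 a b}"
  shows "arclength_reparam (curve_join g1 b g2 c) a (b + (d - c)) s = arclength_reparam g1 a b s"
proof -
  obtain t where t: "t \<in> {a..b}" "curve_len dist g1 a t = s" "arclength_reparam g1 a b s = g1 t"
    using arclength_reparamE[OF r1 s] by blast
  moreover have "b \<le> b + (d - c)" using rectifiable_le[OF r2] by simp
  ultimately have "arclength_reparam (curve_join g1 b g2 c) a (b + (d - c)) s = curve_join g1 b g2 c t"
    using arclength_reparam_eq[OF rectifiable_curve_join, of t s] curve_len_curve_join_left[of t] by auto
  then show ?thesis using t curve_join_left by simp
qed

lemma arclength_reparam_curve_join_right: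
  assumes s: "s \<in> {curve_len dist g1 a b..curve_len dist g1 a b + curve_len dist g2 c d}"
  shows "arclength_reparam (curve_join g1 b g2 c) a (b + (d - c)) s
    = arclength_reparam g2 c d (s - curve_len dist g1 a b)"
proof -
  have "s - curve_len dist g1 a b \<in> {0..curve_len dist g2 c d}" using s by auto
  then obtain t where t: "t \<in> {c..d}" "curve_len dist g2 c t = s - curve_len dist g1 a b"
      "arclength_reparam g2 c d (s - curve_len dist g1 a b) = g2 t"
    by (rule arclength_reparamE[OF r2])
  then have t': "t - c + b \<in> {b..b + (d - c)}" by auto
  then have "arclength_reparam (curve_join g1 b g2 c) a (b + (d - c)) s = curve_join g1 b g2 c (t - c + b)"
    using arclength_reparam_eq[OF rectifiable_curve_join, of "t - c + b" s]
      curve_len_curve_join_right[OF t'] t rectifiable_le[OF r1] by auto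
  then show ?thesis using curve_join_right t t' by simp
qed

lemma line_integral_curve_join:
  fixes \<rho> :: "'a \<Rightarrow> real"
  assumes "continuous_on UNIV \<rho>"
  shows "line_integral \<rho> (curve_join g1 b g2 c) a (b + (d - c))
    = line_integral \<rho> g1 a b + line_integral \<rho> g2 c d"
proof -
  define L1 where "L1 = curve_len dist g1 a b"
  define L2 where "L2 = curve_len dist g2 c d"
  define f where "f = (\<lambda>s. \<rho> (arclength_reparam (curve_join g1 b g2 c) a (b + (d - c)) s))"
  have L: "0 \<le> L1" "0 \<le> L2" unfolding L1_def L2_def using curve_len_rectifiable_nonneg r1 r2 by auto
  have len: "curve_len dist (curve_join g1 b g2 c) a (b + (d - c)) = L1 + L2"
    using curve_len_curve_join_right[of "b + (d - c)"] rectifiable_le[OF r2] unfolding L1_def L2_def by simp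
  have "f integrable_on {0..L1 + L2}"
    using integrable_on_arclength_reparam[OF rectifiable_curve_join assms] len unfolding f_def by simp
  then have "line_integral \<rho> (curve_join g1 b g2 c) a (b + (d - c))
      = integral {0..L1} f + integral {L1..L1 + L2} f"
    unfolding line_integral_arclength_reparam len f_def[symmetric]
    using Henstock_Kurzweil_Integration.integral_combine[of 0 L1 "L1 + L2" f] L by simp
  moreover have "integral {0..L1} f = line_integral \<rho> g1 a b"
    unfolding line_integral_arclength_reparam L1_def f_def
    using arclength_reparam_curve_join_left by (auto intro: integral_cong)
  moreover have "integral {L1..L1 + L2} f = integral {L1..L1 + L2} (\<lambda>s. \<rho> (arclength_reparam g2 c d (s - L1)))"
    unfolding f_def L1_def L2_def using arclength_reparam_curve_join_right by (auto intro: integral_cong)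
  moreover have "\<dots> = line_integral \<rho> g2 c d"
    using integral_shift_real_ivl[of 0 "- L1" L2 "\<lambda>s. \<rho> (arclength_reparam g2 c d s)"]
    unfolding line_integral_arclength_reparam L2_def by (simp add: add.commute)
  ultimately show ?thesis by simp
qed

end

section \<open>The conformal deformation\<close>

lemma has_integral_exp_affine:
  fixes \<alpha> \<beta> L :: real
  assumes "\<beta> \<noteq> 0" "0 \<le> L"
  shows "((\<lambda>s. exp (\<alpha> + \<beta> * s)) has_integral (exp (\<alpha> + \<beta> * L) - exp \<alpha>) / \<beta>) {0..L}"
proof -
  have "((\<lambda>s. exp (\<alpha> + \<beta> * s)) has_integral exp (\<alpha> + \<beta> * L) / \<beta> - exp (\<alpha> + \<beta> * 0) / \<beta>) {0..L}"
  proof (rule fundamental_theorem_of_calculus[OF assms(2)])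
    fix x :: real assume "x \<in> {0..L}"
    have "((\<lambda>s. exp (\<alpha> + \<beta> * s) / \<beta>) has_real_derivative exp (\<alpha> + \<beta> * x) * \<beta> / \<beta>) (at x within {0..L})"
      by (auto intro!: derivative_eq_intros)
    then show "((\<lambda>s. exp (\<alpha> + \<beta> * s) / \<beta>) has_vector_derivative exp (\<alpha> + \<beta> * x)) (at x within {0..L})"
      using assms(1) by (simp add: has_real_derivative_iff_has_vector_derivative)
  qed
  then show ?thesis by (simp add: diff_divide_distrib)
qed

lemma exp_minus_one_le: "0 \<le> u \<Longrightarrow> exp u - 1 \<le> u * exp (u::real)"
proof -
  assume "0 \<le> u"
  have "1 + (- u) \<le> exp (- u)" by (rule exp_ge_add_one_self)
  then have "(1 - u) * exp u \<le> exp (- u) * exp u" using \<open>0 \<le> u\<close> by (intro mult_right_mono) auto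
  then show ?thesis by (simp add: exp_minus algebra_simps)
qed

lemma dist_geodesic_ray_base: "geodesic_ray \<gamma> z0 \<Longrightarrow> 0 \<le> t \<Longrightarrow> dist (\<gamma> t) z0 = t"
  unfolding geodesic_ray_def by (metis abs_of_nonneg diff_zero order_refl)

lemma roughly_starlike_nonneg: "roughly_starlike z0 M \<Longrightarrow> 0 \<le> M"
  unfolding roughly_starlike_def by (meson infdist_nonneg order_trans)

lemma continuous_on_rho_eps: "continuous_on UNIV (rho_eps \<epsilon> z0)"
  unfolding rho_eps_def[abs_def] by (intro continuous_intros)

lemma rho_eps_pos: "0 < rho_eps \<epsilon> z0 x"
  unfolding rho_eps_def by simp

lemma rho_eps_le_1: "0 \<le> \<epsilon> \<Longrightarrow> rho_eps \<epsilon> z0 x \<le> 1"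
  unfolding rho_eps_def by simp

lemma rho_eps_geodesic_ray:
  assumes "geodesic_ray \<gamma> z0" "0 \<le> t"
  shows "rho_eps \<epsilon> z0 (\<gamma> t) = exp (- \<epsilon> * t)"
  unfolding rho_eps_def using dist_geodesic_ray_base[OF assms] by simp

lemma rho_eps_ge_dist:
  "exp (- \<epsilon> * dist x y) * rho_eps \<epsilon> z0 x \<le> rho_eps \<epsilon> z0 y" if "0 \<le> \<epsilon>"
proof -
  have "\<epsilon> * dist y z0 \<le> \<epsilon> * (dist x y + dist x z0)"
    using that dist_triangle[of y z0 x] by (intro mult_left_mono) (auto simp: dist_commute)
  then show ?thesis unfolding rho_eps_def by (simp add: exp_add[symmetric] algebra_simps)
qed

locale conformal_deformation =
  fixes \<epsilon> :: real and z0 :: "'a::metric_space"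
  assumes eps_pos: "0 < \<epsilon>"
begin

lemma line_integral_rho_eps_nonneg:
  "rectifiable dist g a b \<Longrightarrow> 0 \<le> line_integral (rho_eps \<epsilon> z0) g a b"
  unfolding line_integral_arclength_reparam
  by (intro integral_nonneg integrable_on_arclength_reparam continuous_on_rho_eps)
    (auto simp: less_imp_le[OF rho_eps_pos])

text \<open>At arc length \<open>s\<close> the weight is at least \<open>\<rho>(x) exp(-\<epsilon> s)\<close>; integrate over the
  length \<open>L\<close> of the curve, which is at least the distance of its endpoints.\<close>
lemma line_integral_rho_eps_ge_start:
  assumes r: "rectifiable dist g a b"
  shows "rho_eps \<epsilon> z0 (g a) * (1 - exp (- \<epsilon> * dist (g a) (g b))) / \<epsilon>
    \<le> line_integral (rho_eps \<epsilon> z0) g a b"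
proof -
  define L where "L = curve_len dist g a b"
  define x where "x = g a"
  have L: "0 \<le> L" "dist (g a) (g b) \<le> L"
    unfolding L_def using curve_len_rectifiable_nonneg[OF r]
      dist_le_curve_len[OF rectifiable_bdd_above[OF r] rectifiable_le[OF r]] by auto
  then have "rho_eps \<epsilon> z0 x * (1 - exp (- \<epsilon> * dist (g a) (g b))) / \<epsilon>
      \<le> rho_eps \<epsilon> z0 x * (1 - exp (- \<epsilon> * L)) / \<epsilon>"
    using eps_pos less_imp_le[OF rho_eps_pos] by (intro divide_right_mono mult_left_mono) auto
  also have "\<dots> = (exp (- \<epsilon> * dist x z0 + (- \<epsilon>) * L) - exp (- \<epsilon> * dist x z0)) / (- \<epsilon>)"
    unfolding rho_eps_def using eps_pos by (simp add: field_simps exp_add[symmetric])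
  also have "\<dots> \<le> integral {0..L} (\<lambda>s. rho_eps \<epsilon> z0 (arclength_reparam g a b s))"
  proof (rule has_integral_le[OF has_integral_exp_affine integrable_integral])
    show "- \<epsilon> \<noteq> 0" using eps_pos by simp
    show "(\<lambda>s. rho_eps \<epsilon> z0 (arclength_reparam g a b s)) integrable_on {0..L}"
      using integrable_on_arclength_reparam[OF r continuous_on_rho_eps] unfolding L_def .
    fix s assume s: "s \<in> {0..L}"
    have "dist x (arclength_reparam g a b s) \<le> s"
      using arclength_reparam_lipschitz[OF r, of 0 s] s L arclength_reparam_start[OF r]
      unfolding L_def x_def by auto
    then have "exp (- \<epsilon> * s) * rho_eps \<epsilon> z0 x
        \<le> exp (- \<epsilon> * dist x (arclength_reparam g a b s)) * rho_eps \<epsilon> z0 x"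
      using eps_pos less_imp_le[OF rho_eps_pos] by (intro mult_right_mono) auto
    also have "\<dots> \<le> rho_eps \<epsilon> z0 (arclength_reparam g a b s)"
      by (rule rho_eps_ge_dist) (use eps_pos in simp)
    finally have "exp (- \<epsilon> * s) * rho_eps \<epsilon> z0 x \<le> rho_eps \<epsilon> z0 (arclength_reparam g a b s)" .
    moreover have "exp (- \<epsilon> * dist x z0 + - \<epsilon> * s) = exp (- \<epsilon> * s) * rho_eps \<epsilon> z0 x"
      unfolding rho_eps_def by (simp add: exp_add[symmetric])
    ultimately show "exp (- \<epsilon> * dist x z0 + - \<epsilon> * s) \<le> rho_eps \<epsilon> z0 (arclength_reparam g a b s)"
      by simp
  qed (use L in auto)
  finally show ?thesis unfolding line_integral_arclength_reparam L_def x_def .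
qed

lemma line_integral_rho_eps_ge_end:
  assumes r: "rectifiable dist g a b"
  shows "rho_eps \<epsilon> z0 (g b) * (1 - exp (- \<epsilon> * dist (g a) (g b))) / \<epsilon>
    \<le> line_integral (rho_eps \<epsilon> z0) g a b"
proof -
  define L where "L = curve_len dist g a b"
  define y where "y = g b"
  have L: "0 \<le> L" "dist (g a) (g b) \<le> L"
    unfolding L_def using curve_len_rectifiable_nonneg[OF r]
      dist_le_curve_len[OF rectifiable_bdd_above[OF r] rectifiable_le[OF r]] by auto
  then have "rho_eps \<epsilon> z0 y * (1 - exp (- \<epsilon> * dist (g a) (g b))) / \<epsilon>
      \<le> rho_eps \<epsilon> z0 y * (1 - exp (- \<epsilon> * L)) / \<epsilon>"
    using eps_pos less_imp_le[OF rho_eps_pos] by (intro divide_right_mono mult_left_mono) auto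
  also have "\<dots> = (exp (- \<epsilon> * (dist y z0 + L) + \<epsilon> * L) - exp (- \<epsilon> * (dist y z0 + L))) / \<epsilon>"
    unfolding rho_eps_def using eps_pos by (simp add: field_simps exp_add[symmetric] exp_diff)
  also have "\<dots> \<le> integral {0..L} (\<lambda>s. rho_eps \<epsilon> z0 (arclength_reparam g a b s))"
  proof (rule has_integral_le[OF has_integral_exp_affine integrable_integral])
    show "\<epsilon> \<noteq> 0" using eps_pos by simp
    show "(\<lambda>s. rho_eps \<epsilon> z0 (arclength_reparam g a b s)) integrable_on {0..L}"
      using integrable_on_arclength_reparam[OF r continuous_on_rho_eps] unfolding L_def .
    fix s assume s: "s \<in> {0..L}"
    have "dist y (arclength_reparam g a b s) \<le> L - s"
      using arclength_reparam_lipschitz[OF r, of L s] s L arclength_reparam_end[OF r]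
      unfolding L_def y_def by auto
    then have "exp (- \<epsilon> * (L - s)) * rho_eps \<epsilon> z0 y
        \<le> exp (- \<epsilon> * dist y (arclength_reparam g a b s)) * rho_eps \<epsilon> z0 y"
      using eps_pos less_imp_le[OF rho_eps_pos] by (intro mult_right_mono) auto
    also have "\<dots> \<le> rho_eps \<epsilon> z0 (arclength_reparam g a b s)"
      by (rule rho_eps_ge_dist) (use eps_pos in simp)
    finally have "exp (- \<epsilon> * (L - s)) * rho_eps \<epsilon> z0 y \<le> rho_eps \<epsilon> z0 (arclength_reparam g a b s)" .
    moreover have "exp (- \<epsilon> * (dist y z0 + L) + \<epsilon> * s) = exp (- \<epsilon> * (L - s)) * rho_eps \<epsilon> z0 y"
      unfolding rho_eps_def by (simp add: exp_add[symmetric] algebra_simps)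
    ultimately show "exp (- \<epsilon> * (dist y z0 + L) + \<epsilon> * s) \<le> rho_eps \<epsilon> z0 (arclength_reparam g a b s)"
      by simp
  qed (use L in auto)
  finally show ?thesis unfolding line_integral_arclength_reparam L_def y_def .
qed

lemma line_integral_rho_eps_ge_const:
  assumes r: "rectifiable dist g a b"
    and m: "\<And>s. s \<in> {0..curve_len dist g a b} \<Longrightarrow> m \<le> rho_eps \<epsilon> z0 (arclength_reparam g a b s)"
  shows "m * curve_len dist g a b \<le> line_integral (rho_eps \<epsilon> z0) g a b"
proof -
  have "((\<lambda>s. m) has_integral m * curve_len dist g a b) {0..curve_len dist g a b}"
    using has_integral_const_real[of m 0 "curve_len dist g a b"] curve_len_rectifiable_nonneg[OF r]
    by (simp add: mult.commute)
  then show ?thesis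
    unfolding line_integral_arclength_reparam
    using has_integral_le[OF _ integrable_integral[OF integrable_on_arclength_reparam[OF r continuous_on_rho_eps]]] m
    by blast
qed

lemma d_eps_le_line_integral:
  assumes "rectifiable dist g a b" "g a = x" "g b = y"
  shows "d_eps \<epsilon> z0 x y \<le> line_integral (rho_eps \<epsilon> z0) g a b"
  unfolding d_eps_def
proof (rule cInf_lower)
  show "line_integral (rho_eps \<epsilon> z0) g a b \<in> {line_integral (rho_eps \<epsilon> z0) \<gamma> a b | \<gamma> a b.
      rectifiable dist \<gamma> a b \<and> \<gamma> a = x \<and> \<gamma> b = y}"
    using assms by blast
  show "bdd_below {line_integral (rho_eps \<epsilon> z0) \<gamma> a b | \<gamma> a b.
      rectifiable dist \<gamma> a b \<and> \<gamma> a = x \<and> \<gamma> b = y}"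
    using line_integral_rho_eps_nonneg by (intro bdd_belowI[of _ 0]) blast
qed

lemma d_eps_geodesic_ray_forward:
  assumes ray: "geodesic_ray \<gamma> z0" and t: "0 \<le> t1" "t1 \<le> t2"
  shows "d_eps \<epsilon> z0 (\<gamma> t1) (\<gamma> t2) \<le> exp (- \<epsilon> * t1) / \<epsilon>"
proof -
  have iso: "\<forall>s\<in>{t1..t2}. \<forall>t\<in>{t1..t2}. dist (\<gamma> s) (\<gamma> t) = \<bar>s - t\<bar>"
    using ray t unfolding geodesic_ray_def by auto
  have "line_integral (rho_eps \<epsilon> z0) \<gamma> t1 t2 = integral {0..t2 - t1} (\<lambda>s. rho_eps \<epsilon> z0 (\<gamma> (t1 + s)))"
    by (rule line_integral_isometric[OF iso t(2)])
  also have "\<dots> = integral {0..t2 - t1} (\<lambda>s. exp (- \<epsilon> * t1 + (- \<epsilon>) * s))"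
    using rho_eps_geodesic_ray[OF ray] t by (intro integral_cong) (auto simp: algebra_simps)
  also have "\<dots> = (exp (- \<epsilon> * t1 + (- \<epsilon>) * (t2 - t1)) - exp (- \<epsilon> * t1)) / (- \<epsilon>)"
    using has_integral_exp_affine[of "- \<epsilon>" "t2 - t1" "- \<epsilon> * t1"] eps_pos t by (intro integral_unique) auto
  also have "\<dots> \<le> exp (- \<epsilon> * t1) / \<epsilon>"
    using eps_pos by (simp add: divide_simps)
  finally show ?thesis using d_eps_le_line_integral[OF rectifiable_isometric[OF iso t(2)] refl refl] by simp
qed

lemma d_eps_geodesic_ray_backward:
  assumes ray: "geodesic_ray \<gamma> z0" and t: "0 \<le> t1" "t1 \<le> t2"
  shows "d_eps \<epsilon> z0 (\<gamma> t2) (\<gamma> t1) \<le> exp (- \<epsilon> * t1) / \<epsilon>"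
proof -
  define h where "h = (\<lambda>t. \<gamma> (- t))"
  have iso: "\<forall>s\<in>{-t2..-t1}. \<forall>t\<in>{-t2..-t1}. dist (h s) (h t) = \<bar>s - t\<bar>"
    using ray t unfolding geodesic_ray_def h_def by (auto simp: abs_minus_commute)
  have tt: "- t2 \<le> - t1" using t by simp
  have "line_integral (rho_eps \<epsilon> z0) h (-t2) (-t1) = integral {0..t2 - t1} (\<lambda>s. rho_eps \<epsilon> z0 (h (- t2 + s)))"
    using line_integral_isometric[OF iso tt] by simp
  also have "\<dots> = integral {0..t2 - t1} (\<lambda>s. exp (- \<epsilon> * t2 + \<epsilon> * s))"
    using rho_eps_geodesic_ray[OF ray] t unfolding h_def by (intro integral_cong) (auto simp: algebra_simps)
  also have "\<dots> = (exp (- \<epsilon> * t2 + \<epsilon> * (t2 - t1)) - exp (- \<epsilon> * t2)) / \<epsilon>"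
    using has_integral_exp_affine[of \<epsilon> "t2 - t1" "- \<epsilon> * t2"] eps_pos t by (intro integral_unique) auto
  also have "\<dots> \<le> exp (- \<epsilon> * t1) / \<epsilon>"
    using eps_pos by (simp add: divide_simps algebra_simps)
  finally show ?thesis
    using d_eps_le_line_integral[OF rectifiable_isometric[OF iso tt] refl refl] unfolding h_def by simp
qed

lemma d_eps_geodesic_ray:
  assumes ray: "geodesic_ray \<gamma> z0" and t: "0 \<le> t1" "0 \<le> t2"
  shows "d_eps \<epsilon> z0 (\<gamma> t1) (\<gamma> t2) \<le> exp (- \<epsilon> * min t1 t2) / \<epsilon>"
  using d_eps_geodesic_ray_forward[OF ray t(1), of t2] d_eps_geodesic_ray_backward[OF ray t(2), of t1]
  by (cases "t1 \<le> t2") auto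

end

locale geodesic_conformal_deformation = conformal_deformation \<epsilon> z0
  for \<epsilon> :: real and z0 :: "'a::metric_space" +
  assumes geodesic: "geodesic_space TYPE('a::metric_space)"
begin

lemma geodesic_segment_curve:
  fixes x y :: 'a
  obtains g where "rectifiable dist g 0 (dist x y)" "g 0 = x" "g (dist x y) = y"
    "line_integral (rho_eps \<epsilon> z0) g 0 (dist x y) = integral {0..dist x y} (\<lambda>s. rho_eps \<epsilon> z0 (g s))"
    "\<And>s. s \<in> {0..dist x y} \<Longrightarrow> dist x (g s) = s"
proof -
  obtain S where "geodesic_seg S x y" using geodesic unfolding geodesic_space_def by blast
  then obtain g where g: "g 0 = x" "g (dist x y) = y"
    "\<forall>s\<in>{0..dist x y}. \<forall>t\<in>{0..dist x y}. dist (g s) (g t) = \<bar>s - t\<bar>"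
    unfolding geodesic_seg_def by blast
  have "dist x (g s) = s" if "s \<in> {0..dist x y}" for s
    using g(1) g(3) that by force
  then show ?thesis
    using that g rectifiable_isometric[OF g(3)] line_integral_isometric[OF g(3)] by simp
qed

lemma d_eps_greatest:
  assumes "\<And>g a b. rectifiable dist g a b \<Longrightarrow> g a = x \<Longrightarrow> g b = y \<Longrightarrow> B \<le> line_integral (rho_eps \<epsilon> z0) g a b"
  shows "B \<le> d_eps \<epsilon> z0 x y"
  unfolding d_eps_def
proof (rule cInf_greatest)
  obtain g where "rectifiable dist g 0 (dist x y)" "g 0 = x" "g (dist x y) = y"
    using geodesic_segment_curve by metis
  then show "{line_integral (rho_eps \<epsilon> z0) \<gamma> a b | \<gamma> a b. rectifiable dist \<gamma> a b \<and> \<gamma> a = x \<and> \<gamma> b = y} \<noteq> {}"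
    by blast
qed (use assms in blast)

lemma d_eps_lessE:
  assumes "d_eps \<epsilon> z0 x y < r"
  obtains g a b where "rectifiable dist g a b" "g a = x" "g b = y" "line_integral (rho_eps \<epsilon> z0) g a b < r"
  using d_eps_greatest[of x y r] assms by force

lemma d_eps_nonneg: "0 \<le> d_eps \<epsilon> z0 x y"
  by (rule d_eps_greatest) (rule line_integral_rho_eps_nonneg)

lemma d_eps_triangle: "d_eps \<epsilon> z0 x z \<le> d_eps \<epsilon> z0 x y + d_eps \<epsilon> z0 y z"
proof (rule field_le_epsilon)
  fix e :: real assume "0 < e"
  then obtain g1 a1 b1 where g1: "rectifiable dist g1 a1 b1" "g1 a1 = x" "g1 b1 = y"
    "line_integral (rho_eps \<epsilon> z0) g1 a1 b1 < d_eps \<epsilon> z0 x y + e/2"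
    using d_eps_lessE[of x y "d_eps \<epsilon> z0 x y + e/2"] by auto
  obtain g2 a2 b2 where g2: "rectifiable dist g2 a2 b2" "g2 a2 = y" "g2 b2 = z"
    "line_integral (rho_eps \<epsilon> z0) g2 a2 b2 < d_eps \<epsilon> z0 y z + e/2"
    using d_eps_lessE[of y z "d_eps \<epsilon> z0 y z + e/2"] \<open>0 < e\<close> by auto
  let ?g = "curve_join g1 b1 g2 a2"
  have "?g a1 = x" "?g (b1 + (b2 - a2)) = z"
    using curve_join_left[OF g1(1) g2(1)] curve_join_right[OF g1(1) g2(1)] g1 g2
      rectifiable_le[OF g1(1)] rectifiable_le[OF g2(1)] by auto
  then have "d_eps \<epsilon> z0 x z \<le> line_integral (rho_eps \<epsilon> z0) ?g a1 (b1 + (b2 - a2))"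
    using d_eps_le_line_integral rectifiable_curve_join[OF g1(1) g2(1)] g1 g2 by simp
  also have "\<dots> = line_integral (rho_eps \<epsilon> z0) g1 a1 b1 + line_integral (rho_eps \<epsilon> z0) g2 a2 b2"
    using line_integral_curve_join[OF g1(1) g2(1) _ continuous_on_rho_eps] g1 g2 by simp
  finally show "d_eps \<epsilon> z0 x z \<le> d_eps \<epsilon> z0 x y + d_eps \<epsilon> z0 y z + e" using g1 g2 by simp
qed

lemma d_eps_ge_start: "rho_eps \<epsilon> z0 x * (1 - exp (- \<epsilon> * dist x y)) / \<epsilon> \<le> d_eps \<epsilon> z0 x y"
  by (rule d_eps_greatest) (drule line_integral_rho_eps_ge_start, simp)

lemma d_eps_ge_end: "rho_eps \<epsilon> z0 y * (1 - exp (- \<epsilon> * dist x y)) / \<epsilon> \<le> d_eps \<epsilon> z0 x y"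
  by (rule d_eps_greatest) (drule line_integral_rho_eps_ge_end, simp)

lemma d_eps_le_dist: "d_eps \<epsilon> z0 x y \<le> dist x y"
proof -
  obtain g where g: "rectifiable dist g 0 (dist x y)" "g 0 = x" "g (dist x y) = y"
    "line_integral (rho_eps \<epsilon> z0) g 0 (dist x y) = integral {0..dist x y} (\<lambda>s. rho_eps \<epsilon> z0 (g s))"
    using geodesic_segment_curve by metis
  have "integral {0..dist x y} (\<lambda>s. rho_eps \<epsilon> z0 (g s)) \<le> integral {0..dist x y} (\<lambda>s. 1)"
    by (intro integral_le integrable_continuous_real continuous_on_compose2[OF continuous_on_rho_eps
          rectifiable_continuous_on[OF g(1)]]) (use eps_pos in \<open>auto intro!: rho_eps_le_1\<close>)
  then show ?thesis using d_eps_le_line_integral[OF g(1-3)] g(4) by simp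
qed

text \<open>Along a geodesic from \<open>x\<close>, the weight at distance \<open>s\<close> from \<open>x\<close> is at most
  \<open>\<rho>(x) exp(\<epsilon> s)\<close>.\<close>
lemma d_eps_le_exp: "d_eps \<epsilon> z0 x y \<le> rho_eps \<epsilon> z0 x * (exp (\<epsilon> * dist x y) - 1) / \<epsilon>"
proof -
  obtain g where g: "rectifiable dist g 0 (dist x y)" "g 0 = x" "g (dist x y) = y"
    "line_integral (rho_eps \<epsilon> z0) g 0 (dist x y) = integral {0..dist x y} (\<lambda>s. rho_eps \<epsilon> z0 (g s))"
    "\<And>s. s \<in> {0..dist x y} \<Longrightarrow> dist x (g s) = s"
    using geodesic_segment_curve by metis
  have "integral {0..dist x y} (\<lambda>s. rho_eps \<epsilon> z0 (g s))
      \<le> (exp (- \<epsilon> * dist x z0 + \<epsilon> * dist x y) - exp (- \<epsilon> * dist x z0)) / \<epsilon>"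
  proof (rule has_integral_le[OF integrable_integral has_integral_exp_affine])
    show "(\<lambda>s. rho_eps \<epsilon> z0 (g s)) integrable_on {0..dist x y}"
      by (intro integrable_continuous_real continuous_on_compose2[OF continuous_on_rho_eps
            rectifiable_continuous_on[OF g(1)]]) auto
    fix s assume s: "s \<in> {0..dist x y}"
    have "exp (- \<epsilon> * s) * rho_eps \<epsilon> z0 (g s) \<le> rho_eps \<epsilon> z0 x"
      using rho_eps_ge_dist[of \<epsilon> "g s" x z0] eps_pos g(5)[OF s] by (simp add: dist_commute)
    then have "rho_eps \<epsilon> z0 (g s) \<le> exp (\<epsilon> * s) * rho_eps \<epsilon> z0 x"
      by (simp add: exp_minus field_simps)
    moreover have "exp (- \<epsilon> * dist x z0 + \<epsilon> * s) = exp (\<epsilon> * s) * rho_eps \<epsilon> z0 x"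
      by (simp add: rho_eps_def exp_add[symmetric])
    ultimately show "rho_eps \<epsilon> z0 (g s) \<le> exp (- \<epsilon> * dist x z0 + \<epsilon> * s)"
      by simp
  qed (use eps_pos in auto)
  also have "\<dots> = rho_eps \<epsilon> z0 x * (exp (\<epsilon> * dist x y) - 1) / \<epsilon>"
    unfolding rho_eps_def by (simp add: exp_add[symmetric] exp_diff algebra_simps)
  finally show ?thesis using d_eps_le_line_integral[OF g(1-3)] g(4) by simp
qed

lemma d_eps_le_rho_eps_dist_exp:
  "d_eps \<epsilon> z0 x y \<le> rho_eps \<epsilon> z0 x * dist x y * exp (\<epsilon> * dist x y)"
proof -
  have "d_eps \<epsilon> z0 x y \<le> rho_eps \<epsilon> z0 x * (exp (\<epsilon> * dist x y) - 1) / \<epsilon>" by (rule d_eps_le_exp)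
  also have "\<dots> \<le> rho_eps \<epsilon> z0 x * (\<epsilon> * dist x y * exp (\<epsilon> * dist x y)) / \<epsilon>"
    using exp_minus_one_le[of "\<epsilon> * dist x y"] eps_pos less_imp_le[OF rho_eps_pos]
    by (intro divide_right_mono mult_left_mono) auto
  finally show ?thesis using eps_pos by simp
qed

lemma d_eps_tendsto_lim:
  assumes "cauchy_wrt (d_eps \<epsilon> z0) s"
  shows "(\<lambda>n. d_eps \<epsilon> z0 x (s n)) \<longlonglongrightarrow> lim (\<lambda>n. d_eps \<epsilon> z0 x (s n))"
proof -
  have "Cauchy (\<lambda>n. d_eps \<epsilon> z0 x (s n))"
    unfolding Cauchy_def
  proof (intro allI impI)
    fix e :: real assume "0 < e"
    then obtain N where N: "\<forall>m\<ge>N. \<forall>n\<ge>N. d_eps \<epsilon> z0 (s m) (s n) < e"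
      using assms unfolding cauchy_wrt_def by blast
    have "dist (d_eps \<epsilon> z0 x (s m)) (d_eps \<epsilon> z0 x (s n)) < e" if "N \<le> m" "N \<le> n" for m n
    proof -
      have "d_eps \<epsilon> z0 (s m) (s n) < e" "d_eps \<epsilon> z0 (s n) (s m) < e" using N that by auto
      then show ?thesis
        using d_eps_triangle[of x "s n" "s m"] d_eps_triangle[of x "s m" "s n"]
        unfolding dist_real_def abs_less_iff by linarith
    qed
    then show "\<exists>M. \<forall>m\<ge>M. \<forall>n\<ge>M. dist (d_eps \<epsilon> z0 x (s m)) (d_eps \<epsilon> z0 x (s n)) < e" by blast
  qed
  then show ?thesis by (simp add: Cauchy_convergent_iff convergent_LIMSEQ_iff)
qed

section \<open>The distance to the boundary\<close>

lemma d_bd_le_lim: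
  assumes "cauchy_wrt (d_eps \<epsilon> z0) s" "\<not> (\<exists>z. (\<lambda>n. d_eps \<epsilon> z0 (s n) z) \<longlonglongrightarrow> 0)"
  shows "d_bd (d_eps \<epsilon> z0) x \<le> lim (\<lambda>n. d_eps \<epsilon> z0 x (s n))"
  unfolding d_bd_def
proof (rule cInf_lower)
  show "lim (\<lambda>n. d_eps \<epsilon> z0 x (s n)) \<in> {lim (\<lambda>n. d_eps \<epsilon> z0 x (s n)) | s. cauchy_wrt (d_eps \<epsilon> z0) s \<and>
      \<not> (\<exists>z. (\<lambda>n. d_eps \<epsilon> z0 (s n) z) \<longlonglongrightarrow> 0)}"
    using assms by blast
  have "0 \<le> lim (\<lambda>n. d_eps \<epsilon> z0 x (s n))" if "cauchy_wrt (d_eps \<epsilon> z0) s" for s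
    by (rule LIMSEQ_le_const[OF d_eps_tendsto_lim[OF that]]) (simp add: d_eps_nonneg)
  then show "bdd_below {lim (\<lambda>n. d_eps \<epsilon> z0 x (s n)) | s. cauchy_wrt (d_eps \<epsilon> z0) s \<and>
      \<not> (\<exists>z. (\<lambda>n. d_eps \<epsilon> z0 (s n) z) \<longlonglongrightarrow> 0)}"
    by (intro bdd_belowI[of _ 0]) blast
qed

context
  fixes \<gamma> :: "real \<Rightarrow> 'a" and t0 :: real
  assumes ray: "geodesic_ray \<gamma> z0" and t0: "0 \<le> t0"
begin

lemma geodesic_ray_seq_cauchy: "cauchy_wrt (d_eps \<epsilon> z0) (\<lambda>n. \<gamma> (t0 + real n))"
  unfolding cauchy_wrt_def
proof (intro allI impI)
  fix e :: real assume "0 < e"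
  have "(\<lambda>n. exp (- \<epsilon>) ^ n) \<longlonglongrightarrow> 0"
    by (rule LIMSEQ_realpow_zero) (use eps_pos in auto)
  then have "eventually (\<lambda>n. exp (- \<epsilon>) ^ n < \<epsilon> * e) sequentially"
    using \<open>0 < e\<close> eps_pos by (intro order_tendstoD(2)) auto
  then obtain N where N: "exp (- \<epsilon>) ^ N < \<epsilon> * e" by (auto simp: eventually_sequentially)
  have "d_eps \<epsilon> z0 (\<gamma> (t0 + real m)) (\<gamma> (t0 + real n)) < e" if "N \<le> m" "N \<le> n" for m n
  proof -
    have "d_eps \<epsilon> z0 (\<gamma> (t0 + real m)) (\<gamma> (t0 + real n)) \<le> exp (- \<epsilon> * min (t0 + real m) (t0 + real n)) / \<epsilon>"
      using d_eps_geodesic_ray[OF ray] t0 by simp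
    also have "\<dots> \<le> exp (- \<epsilon> * real N) / \<epsilon>"
      using eps_pos that t0 by (intro divide_right_mono) (auto simp: min_def)
    also have "\<dots> < e"
      using N eps_pos by (simp add: exp_of_nat_mult[symmetric] mult.commute field_simps)
    finally show ?thesis .
  qed
  then show "\<exists>N. \<forall>m\<ge>N. \<forall>n\<ge>N. d_eps \<epsilon> z0 (\<gamma> (t0 + real m)) (\<gamma> (t0 + real n)) < e" by blast
qed

lemma geodesic_ray_seq_not_convergent:
  "\<not> (\<exists>z. (\<lambda>n. d_eps \<epsilon> z0 (\<gamma> (t0 + real n)) z) \<longlonglongrightarrow> 0)"
proof
  assume "\<exists>z. (\<lambda>n. d_eps \<epsilon> z0 (\<gamma> (t0 + real n)) z) \<longlonglongrightarrow> 0"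
  then obtain z where z: "(\<lambda>n. d_eps \<epsilon> z0 (\<gamma> (t0 + real n)) z) \<longlonglongrightarrow> 0" by blast
  define c where "c = rho_eps \<epsilon> z0 z * (1 - exp (- \<epsilon>)) / \<epsilon>"
  have "0 < c" unfolding c_def using eps_pos rho_eps_pos[of \<epsilon> z0 z] by simp
  then obtain N1 where N1: "\<And>n. n \<ge> N1 \<Longrightarrow> d_eps \<epsilon> z0 (\<gamma> (t0 + real n)) z < c"
    using order_tendstoD(2)[OF z] unfolding eventually_sequentially by blast
  obtain N0 :: nat where N0: "dist z z0 + 1 < real N0" using reals_Archimedean2 by blast
  define n where "n = max N0 N1"
  have "dist (\<gamma> (t0 + real n)) z0 = t0 + real n" using dist_geodesic_ray_base[OF ray] t0 by simp
  moreover have "dist (\<gamma> (t0 + real n)) z0 \<le> dist (\<gamma> (t0 + real n)) z + dist z z0" by (rule dist_triangle)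
  moreover have "real N0 \<le> real n" unfolding n_def by simp
  ultimately have "1 \<le> dist (\<gamma> (t0 + real n)) z" using N0 t0 by simp
  then have "c \<le> rho_eps \<epsilon> z0 z * (1 - exp (- \<epsilon> * dist (\<gamma> (t0 + real n)) z)) / \<epsilon>"
    unfolding c_def using eps_pos less_imp_le[OF rho_eps_pos] by (intro divide_right_mono mult_left_mono) auto
  also have "\<dots> \<le> d_eps \<epsilon> z0 (\<gamma> (t0 + real n)) z" by (rule d_eps_ge_end)
  finally show False using N1[of n] unfolding n_def by simp
qed

lemma lim_d_eps_geodesic_ray_seq_le:
  "lim (\<lambda>n. d_eps \<epsilon> z0 x (\<gamma> (t0 + real n))) \<le> d_eps \<epsilon> z0 x (\<gamma> t0) + exp (- \<epsilon> * t0) / \<epsilon>"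
proof (rule LIMSEQ_le_const2[OF d_eps_tendsto_lim[OF geodesic_ray_seq_cauchy]])
  have "d_eps \<epsilon> z0 x (\<gamma> (t0 + real n)) \<le> d_eps \<epsilon> z0 x (\<gamma> t0) + exp (- \<epsilon> * t0) / \<epsilon>" for n
    using d_eps_triangle[of x "\<gamma> (t0 + real n)" "\<gamma> t0"] d_eps_geodesic_ray_forward[OF ray t0, of "t0 + real n"]
    by simp
  then show "\<exists>N. \<forall>n\<ge>N. d_eps \<epsilon> z0 x (\<gamma> (t0 + real n)) \<le> d_eps \<epsilon> z0 x (\<gamma> t0) + exp (- \<epsilon> * t0) / \<epsilon>"
    by blast
qed

end

lemma dist_le_of_d_eps_le:
  assumes "d_eps \<epsilon> z0 x y \<le> c" "c < rho_eps \<epsilon> z0 x / \<epsilon>"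
  shows "dist x y \<le> - ln (1 - \<epsilon> * c / rho_eps \<epsilon> z0 x) / \<epsilon>"
proof -
  let ?\<rho> = "rho_eps \<epsilon> z0 x"
  have \<rho>: "0 < ?\<rho>" by (rule rho_eps_pos)
  have q: "0 < 1 - \<epsilon> * c / ?\<rho>" using assms(2) \<rho> eps_pos by (simp add: field_simps)
  have "?\<rho> * (1 - exp (- \<epsilon> * dist x y)) / \<epsilon> \<le> c" using d_eps_ge_start assms(1) by (rule order_trans)
  then have "1 - \<epsilon> * c / ?\<rho> \<le> exp (- \<epsilon> * dist x y)" using \<rho> eps_pos by (simp add: field_simps)
  then have "ln (1 - \<epsilon> * c / ?\<rho>) \<le> - \<epsilon> * dist x y" using q by (metis ln_exp ln_le_cancel_iff exp_gt_zero)
  then show ?thesis using eps_pos by (simp add: field_simps)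
qed

text \<open>Where the weight is bounded below, \<open>d_eps\<close> dominates a function of \<open>dist\<close> that is
  increasing and vanishes only at \<open>0\<close>.\<close>
lemma Cauchy_of_cauchy_wrt_d_eps:
  assumes s: "cauchy_wrt (d_eps \<epsilon> z0) s" and m: "0 < m" "\<And>n. n \<ge> N \<Longrightarrow> m \<le> rho_eps \<epsilon> z0 (s n)"
  shows "Cauchy s"
  unfolding Cauchy_def
proof (intro allI impI)
  fix e :: real assume "0 < e"
  then have "0 < m * (1 - exp (- \<epsilon> * e)) / \<epsilon>" using m eps_pos by simp
  then obtain N1 where N1: "\<forall>k\<ge>N1. \<forall>n\<ge>N1. d_eps \<epsilon> z0 (s k) (s n) < m * (1 - exp (- \<epsilon> * e)) / \<epsilon>"
    using s unfolding cauchy_wrt_def by blast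
  have "dist (s k) (s n) < e" if "max N N1 \<le> k" "max N N1 \<le> n" for k n
  proof -
    have "m * (1 - exp (- \<epsilon> * dist (s k) (s n))) / \<epsilon>
        \<le> rho_eps \<epsilon> z0 (s k) * (1 - exp (- \<epsilon> * dist (s k) (s n))) / \<epsilon>"
      using m(2)[of k] that eps_pos by (intro divide_right_mono mult_right_mono) auto
    also have "\<dots> \<le> d_eps \<epsilon> z0 (s k) (s n)" by (rule d_eps_ge_start)
    also have "\<dots> < m * (1 - exp (- \<epsilon> * e)) / \<epsilon>" using N1 that by auto
    finally have "exp (- \<epsilon> * e) < exp (- \<epsilon> * dist (s k) (s n))"
      using m(1) eps_pos by (simp add: divide_strict_right_mono field_simps)
    then show ?thesis using eps_pos by simp
  qed
  then show "\<exists>M. \<forall>k\<ge>M. \<forall>n\<ge>M. dist (s k) (s n) < e" by blast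
qed

end

locale roughly_starlike_deformation = geodesic_conformal_deformation \<epsilon> z0
  for \<epsilon> :: real and z0 :: "'a::metric_space" +
  fixes M :: real
  assumes complete: "complete (UNIV :: 'a set)" and starlike: "roughly_starlike z0 M"
begin

lemma d_bd_greatest:
  assumes "\<And>s. cauchy_wrt (d_eps \<epsilon> z0) s \<Longrightarrow> \<not> (\<exists>z. (\<lambda>n. d_eps \<epsilon> z0 (s n) z) \<longlonglongrightarrow> 0) \<Longrightarrow>
    B \<le> lim (\<lambda>n. d_eps \<epsilon> z0 x (s n))"
  shows "B \<le> d_bd (d_eps \<epsilon> z0) x"
  unfolding d_bd_def
proof (rule cInf_greatest)
  obtain \<gamma> where "geodesic_ray \<gamma> z0" using starlike unfolding roughly_starlike_def by blast
  then show "{lim (\<lambda>n. d_eps \<epsilon> z0 x (s n)) | s. cauchy_wrt (d_eps \<epsilon> z0) s \<and>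
      \<not> (\<exists>z. (\<lambda>n. d_eps \<epsilon> z0 (s n) z) \<longlonglongrightarrow> 0)} \<noteq> {}"
    using geodesic_ray_seq_cauchy geodesic_ray_seq_not_convergent by blast
qed (use assms in blast)

lemma d_bd_le_d_eps_add: "d_bd (d_eps \<epsilon> z0) x \<le> d_eps \<epsilon> z0 x z + d_bd (d_eps \<epsilon> z0) z"
proof -
  have "d_bd (d_eps \<epsilon> z0) x - d_eps \<epsilon> z0 x z \<le> lim (\<lambda>n. d_eps \<epsilon> z0 z (s n))"
    if s: "cauchy_wrt (d_eps \<epsilon> z0) s" "\<not> (\<exists>y. (\<lambda>n. d_eps \<epsilon> z0 (s n) y) \<longlonglongrightarrow> 0)" for s
  proof -
    have "d_bd (d_eps \<epsilon> z0) x \<le> lim (\<lambda>n. d_eps \<epsilon> z0 x (s n))" by (rule d_bd_le_lim[OF s])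
    also have "\<dots> \<le> d_eps \<epsilon> z0 x z + lim (\<lambda>n. d_eps \<epsilon> z0 z (s n))"
    proof (rule LIMSEQ_le[OF d_eps_tendsto_lim[OF s(1)]])
      show "(\<lambda>n. d_eps \<epsilon> z0 x z + d_eps \<epsilon> z0 z (s n)) \<longlonglongrightarrow> d_eps \<epsilon> z0 x z + lim (\<lambda>n. d_eps \<epsilon> z0 z (s n))"
        by (intro tendsto_add tendsto_const d_eps_tendsto_lim[OF s(1)])
    qed (use d_eps_triangle in blast)
    finally show ?thesis by simp
  qed
  then show ?thesis using d_bd_greatest[of "d_bd (d_eps \<epsilon> z0) x - d_eps \<epsilon> z0 x z" z] by simp
qed

lemma d_bd_le_geodesic_ray_point:
  assumes ray: "geodesic_ray \<gamma> z0" and t0: "0 \<le> t0"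
  shows "d_bd (d_eps \<epsilon> z0) x \<le> rho_eps \<epsilon> z0 x * (2 * exp (\<epsilon> * dist x (\<gamma> t0)) - 1) / \<epsilon>"
proof -
  let ?D = "dist x (\<gamma> t0)"
  have "d_bd (d_eps \<epsilon> z0) x \<le> lim (\<lambda>n. d_eps \<epsilon> z0 x (\<gamma> (t0 + real n)))"
    by (rule d_bd_le_lim[OF geodesic_ray_seq_cauchy[OF ray t0] geodesic_ray_seq_not_convergent[OF ray t0]])
  also have "\<dots> \<le> d_eps \<epsilon> z0 x (\<gamma> t0) + exp (- \<epsilon> * t0) / \<epsilon>"
    by (rule lim_d_eps_geodesic_ray_seq_le[OF ray t0])
  also have "\<dots> \<le> rho_eps \<epsilon> z0 x * (exp (\<epsilon> * ?D) - 1) / \<epsilon> + rho_eps \<epsilon> z0 x * exp (\<epsilon> * ?D) / \<epsilon>"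
  proof -
    have "exp (- \<epsilon> * ?D) * exp (- \<epsilon> * t0) \<le> rho_eps \<epsilon> z0 x"
      using rho_eps_ge_dist[of \<epsilon> "\<gamma> t0" x z0] rho_eps_geodesic_ray[OF ray t0] eps_pos
      by (simp add: dist_commute)
    then have "exp (- \<epsilon> * t0) \<le> rho_eps \<epsilon> z0 x * exp (\<epsilon> * ?D)"
      by (simp add: exp_minus field_simps)
    then show ?thesis
      using d_eps_le_exp[of x "\<gamma> t0"] eps_pos by (simp add: add_mono divide_right_mono)
  qed
  also have "\<dots> = rho_eps \<epsilon> z0 x * (2 * exp (\<epsilon> * ?D) - 1) / \<epsilon>" using eps_pos by (simp add: field_simps)
  finally show ?thesis .
qed

lemma d_bd_le_rho_eps: "d_bd (d_eps \<epsilon> z0) x \<le> rho_eps \<epsilon> z0 x * (2 * exp (\<epsilon> * M) - 1) / \<epsilon>"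
proof -
  obtain \<gamma> where ray: "geodesic_ray \<gamma> z0" and near: "infdist x (\<gamma> ` {0..}) \<le> M"
    using starlike unfolding roughly_starlike_def by blast
  let ?f = "\<lambda>\<eta>. rho_eps \<epsilon> z0 x * (2 * exp (\<epsilon> * (M + \<eta>)) - 1) / \<epsilon>"
  have "d_bd (d_eps \<epsilon> z0) x \<le> ?f \<eta>" if "0 < \<eta>" for \<eta>
  proof -
    have "Inf (dist x ` \<gamma> ` {0..}) < M + \<eta>"
      using near that infdist_notempty[of "\<gamma> ` {0..}" x] by simp
    then obtain t0 where t0: "0 \<le> t0" "dist x (\<gamma> t0) < M + \<eta>"
      using cInf_lessD[of "dist x ` \<gamma> ` {0..}" "M + \<eta>"] by auto
    have "d_bd (d_eps \<epsilon> z0) x \<le> rho_eps \<epsilon> z0 x * (2 * exp (\<epsilon> * dist x (\<gamma> t0)) - 1) / \<epsilon>"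
      by (rule d_bd_le_geodesic_ray_point[OF ray t0(1)])
    also have "\<dots> \<le> ?f \<eta>"
      using t0 eps_pos less_imp_le[OF rho_eps_pos] by (intro divide_right_mono mult_left_mono) auto
    finally show ?thesis .
  qed
  moreover have "(?f \<longlongrightarrow> ?f 0) (at_right 0)"
    using eps_pos by (intro tendsto_intros) auto
  ultimately show ?thesis
    using tendsto_le[OF trivial_limit_at_right_real _ tendsto_const, of ?f "?f 0" 0 "d_bd (d_eps \<epsilon> z0) x"]
      eventually_at_right_less[of "0::real"]
    by (simp add: eventually_mono)
qed

lemma rho_eps_le_d_bd: "rho_eps \<epsilon> z0 x / \<epsilon> \<le> d_bd (d_eps \<epsilon> z0) x"
proof (rule d_bd_greatest, rule ccontr)
  fix s assume s: "cauchy_wrt (d_eps \<epsilon> z0) s" and nc: "\<not> (\<exists>z. (\<lambda>n. d_eps \<epsilon> z0 (s n) z) \<longlonglongrightarrow> 0)"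
  let ?\<rho> = "rho_eps \<epsilon> z0 x" and ?v = "lim (\<lambda>n. d_eps \<epsilon> z0 x (s n))"
  assume "\<not> ?\<rho> / \<epsilon> \<le> ?v"
  then obtain c where c: "?v < c" "c < ?\<rho> / \<epsilon>" using dense not_le by metis
  define R where "R = - ln (1 - \<epsilon> * c / ?\<rho>) / \<epsilon>"
  obtain N where N: "\<And>n. n \<ge> N \<Longrightarrow> d_eps \<epsilon> z0 x (s n) < c"
    using order_tendstoD(2)[OF d_eps_tendsto_lim[OF s] c(1)] unfolding eventually_sequentially by blast
  have "exp (- \<epsilon> * R) * ?\<rho> \<le> rho_eps \<epsilon> z0 (s n)" if "n \<ge> N" for n
  proof -
    have "dist x (s n) \<le> R"
      unfolding R_def using N[OF that] c(2) by (intro dist_le_of_d_eps_le) auto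
    then have "exp (- \<epsilon> * R) * ?\<rho> \<le> exp (- \<epsilon> * dist x (s n)) * ?\<rho>"
      using eps_pos less_imp_le[OF rho_eps_pos] by (intro mult_right_mono) auto
    also have "\<dots> \<le> rho_eps \<epsilon> z0 (s n)" by (rule rho_eps_ge_dist) (use eps_pos in simp)
    finally show ?thesis .
  qed
  then have "Cauchy s"
    by (intro Cauchy_of_cauchy_wrt_d_eps[OF s, of "exp (- \<epsilon> * R) * ?\<rho>" N]) (auto simp: rho_eps_pos)
  then obtain z where z: "s \<longlonglongrightarrow> z" using complete unfolding complete_def by blast
  have "(\<lambda>n. d_eps \<epsilon> z0 (s n) z) \<longlonglongrightarrow> 0"
  proof (rule tendsto_sandwich[of "\<lambda>n. 0" _ _ "\<lambda>n. dist (s n) z"])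
    show "(\<lambda>n. dist (s n) z) \<longlonglongrightarrow> 0" using tendsto_dist[OF z tendsto_const[of z]] by simp
  qed (auto simp: d_eps_nonneg d_eps_le_dist)
  then show False using nc by blast
qed

section \<open>Balls of the deformed metric\<close>

lemma eps_M_nonneg: "0 \<le> \<epsilon> * M"
  using eps_pos roughly_starlike_nonneg[OF starlike] by simp

lemma one_le_starlike_const: "1 \<le> 2 * exp (\<epsilon> * M) - 1"
  using eps_M_nonneg by simp

lemma starlike_const_pos: "0 < 2 * (2 * exp (\<epsilon> * M) - 1)"
  using one_le_starlike_const by (intro mult_pos_pos) linarith+

lemma starlike_const_less: "2 * (2 * exp (\<epsilon> * M) - 1) < 2 * exp 1 * (2 * exp (\<epsilon> * M) - 1)"
  using mult_strict_right_mono[OF _ starlike_const_pos, of 1 "exp 1"] by (simp add: ac_simps)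

lemma d_bd_nonneg: "0 \<le> d_bd (d_eps \<epsilon> z0) x"
  using rho_eps_le_d_bd[of x] rho_eps_pos[of \<epsilon> z0 x] eps_pos
  by (meson divide_pos_pos less_le_trans less_imp_le)

lemma rho_eps_less_of_d_eps_less:
  assumes "d_eps \<epsilon> z0 x z < d_bd (d_eps \<epsilon> z0) x / 2"
  shows "rho_eps \<epsilon> z0 x < 2 * (2 * exp (\<epsilon> * M) - 1) * rho_eps \<epsilon> z0 z"
proof -
  have "rho_eps \<epsilon> z0 x / (2 * \<epsilon>) \<le> d_bd (d_eps \<epsilon> z0) x / 2"
    using rho_eps_le_d_bd[of x] by simp
  also have "\<dots> < d_bd (d_eps \<epsilon> z0) x - d_eps \<epsilon> z0 x z" using assms by simp
  also have "\<dots> \<le> d_bd (d_eps \<epsilon> z0) z" using d_bd_le_d_eps_add[of x z] by simp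
  also have "\<dots> \<le> rho_eps \<epsilon> z0 z * (2 * exp (\<epsilon> * M) - 1) / \<epsilon>" by (rule d_bd_le_rho_eps)
  finally show ?thesis using eps_pos by (simp add: field_simps)
qed

lemma line_integral_ge_rho_eps_dist:
  assumes r: "rectifiable dist g a b" and x: "g a = x"
    and small: "line_integral (rho_eps \<epsilon> z0) g a b < d_bd (d_eps \<epsilon> z0) x / 2"
  shows "rho_eps \<epsilon> z0 x / (2 * (2 * exp (\<epsilon> * M) - 1)) * dist x (g b)
    \<le> line_integral (rho_eps \<epsilon> z0) g a b"
proof -
  let ?m = "rho_eps \<epsilon> z0 x / (2 * (2 * exp (\<epsilon> * M) - 1))"
  have "?m \<le> rho_eps \<epsilon> z0 (arclength_reparam g a b s)" if s: "s \<in> {0..curve_len dist g a b}" for s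
  proof -
    obtain t where t: "t \<in> {a..b}" "arclength_reparam g a b s = g t"
      using arclength_reparamE[OF r s] by blast
    have "d_eps \<epsilon> z0 x (g t) \<le> line_integral (rho_eps \<epsilon> z0) g a t"
      using d_eps_le_line_integral[OF rectifiable_subinterval[OF r t(1)] x] by simp
    also have "\<dots> \<le> line_integral (rho_eps \<epsilon> z0) g a b"
      by (rule line_integral_mono_subinterval[OF r t(1) continuous_on_rho_eps less_imp_le[OF rho_eps_pos]])
    finally have "rho_eps \<epsilon> z0 x < 2 * (2 * exp (\<epsilon> * M) - 1) * rho_eps \<epsilon> z0 (g t)"
      using small by (intro rho_eps_less_of_d_eps_less) simp
    moreover have "0 < 2 * (2 * exp (\<epsilon> * M) - 1)" by (rule starlike_const_pos)
    ultimately show ?thesis using t by (simp add: divide_le_eq mult.commute)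
  qed
  then have "?m * curve_len dist g a b \<le> line_integral (rho_eps \<epsilon> z0) g a b"
    by (rule line_integral_rho_eps_ge_const[OF r])
  moreover have "dist x (g b) \<le> curve_len dist g a b"
    using dist_le_curve_len[OF rectifiable_bdd_above[OF r] rectifiable_le[OF r]] x by simp
  moreover have "0 \<le> ?m" using divide_nonneg_pos[OF less_imp_le[OF rho_eps_pos] starlike_const_pos] .
  ultimately show ?thesis by (meson mult_left_mono order_trans)
qed

lemma rho_eps_dist_less_of_d_eps_less:
  assumes "d_eps \<epsilon> z0 x y < r" "r \<le> d_bd (d_eps \<epsilon> z0) x / 2"
  shows "rho_eps \<epsilon> z0 x * dist x y < 2 * (2 * exp (\<epsilon> * M) - 1) * r"
proof -
  obtain g a b where g: "rectifiable dist g a b" "g a = x" "g b = y"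
    "line_integral (rho_eps \<epsilon> z0) g a b < r"
    using d_eps_lessE[OF assms(1)] .
  then have "rho_eps \<epsilon> z0 x / (2 * (2 * exp (\<epsilon> * M) - 1)) * dist x y < r"
    using line_integral_ge_rho_eps_dist[OF g(1,2)] assms(2) by fastforce
  moreover have "0 < 2 * (2 * exp (\<epsilon> * M) - 1)" by (rule starlike_const_pos)
  ultimately show ?thesis by (simp add: divide_less_eq mult.commute)
qed

lemma d_eps_ball_subset_ball:
  assumes "r \<le> d_bd (d_eps \<epsilon> z0) x / 2"
  shows "{y. d_eps \<epsilon> z0 x y < r} \<subseteq> ball x (2 * (2 * exp (\<epsilon> * M) - 1) * r / rho_eps \<epsilon> z0 x)"
  using rho_eps_dist_less_of_d_eps_less[OF _ assms] rho_eps_pos[of \<epsilon> z0 x]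
  by (auto simp: field_simps)

lemma rho_eps_dist_le_d_eps:
  assumes "d_eps \<epsilon> z0 x y < d_bd (d_eps \<epsilon> z0) x / 2"
  shows "rho_eps \<epsilon> z0 x / (2 * (2 * exp (\<epsilon> * M) - 1)) * dist x y \<le> d_eps \<epsilon> z0 x y"
proof (rule dense_ge_bounded[OF assms])
  fix r assume "d_eps \<epsilon> z0 x y < r" "r < d_bd (d_eps \<epsilon> z0) x / 2"
  then have "rho_eps \<epsilon> z0 x * dist x y < 2 * (2 * exp (\<epsilon> * M) - 1) * r"
    by (intro rho_eps_dist_less_of_d_eps_less) auto
  moreover have "0 < 2 * (2 * exp (\<epsilon> * M) - 1)" by (rule starlike_const_pos)
  ultimately show "rho_eps \<epsilon> z0 x / (2 * (2 * exp (\<epsilon> * M) - 1)) * dist x y \<le> r"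
    by (simp add: divide_le_eq mult.commute)
qed

text \<open>\<open>exp (- (1 + \<epsilon> M))\<close> is the constant \<open>C\<^sub>1\<close>, and
  \<open>C\<^sub>1 (2 exp(\<epsilon> M) - 1) = exp(-1) (2 - exp(-\<epsilon> M)) < 2 exp(-1)\<close>.\<close>
lemma eps_d_bd_less:
  "\<epsilon> * exp (- (1 + \<epsilon> * M)) * d_bd (d_eps \<epsilon> z0) x < 2 * exp (- 1) * rho_eps \<epsilon> z0 x"
proof -
  have "\<epsilon> * d_bd (d_eps \<epsilon> z0) x \<le> (2 * exp (\<epsilon> * M) - 1) * rho_eps \<epsilon> z0 x"
    using d_bd_le_rho_eps[of x] eps_pos by (simp add: pos_le_divide_eq mult.commute)
  then have "\<epsilon> * exp (- (1 + \<epsilon> * M)) * d_bd (d_eps \<epsilon> z0) x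
      \<le> exp (- (1 + \<epsilon> * M)) * (2 * exp (\<epsilon> * M) - 1) * rho_eps \<epsilon> z0 x"
    using mult_left_mono[OF _ exp_ge_zero, of _ _ "- (1 + \<epsilon> * M)"] by (simp add: ac_simps)
  also have "\<dots> = exp (- 1) * (2 - exp (- (\<epsilon> * M))) * rho_eps \<epsilon> z0 x"
    by (simp add: exp_add[symmetric] exp_diff exp_minus field_simps)
  also have "\<dots> < 2 * exp (- 1) * rho_eps \<epsilon> z0 x"
    using rho_eps_pos[of \<epsilon> z0 x] by simp
  finally show ?thesis .
qed

lemma ball_subset_d_eps_ball:
  assumes r: "0 < r" "r \<le> d_bd (d_eps \<epsilon> z0) x / 2"
  shows "ball x (exp (- (1 + \<epsilon> * M)) * r / rho_eps \<epsilon> z0 x) \<subseteq> {y. d_eps \<epsilon> z0 x y < r}"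
proof
  fix y assume "y \<in> ball x (exp (- (1 + \<epsilon> * M)) * r / rho_eps \<epsilon> z0 x)"
  then have D: "rho_eps \<epsilon> z0 x * dist x y < exp (- (1 + \<epsilon> * M)) * r"
    using rho_eps_pos[of \<epsilon> z0 x] by (simp add: field_simps)
  have "2 * \<epsilon> * (rho_eps \<epsilon> z0 x * dist x y) < 2 * \<epsilon> * (exp (- (1 + \<epsilon> * M)) * r)"
    using D eps_pos by simp
  also have "\<dots> \<le> \<epsilon> * exp (- (1 + \<epsilon> * M)) * d_bd (d_eps \<epsilon> z0) x"
    using r eps_pos by simp
  also have "\<dots> < 2 * exp (- 1) * rho_eps \<epsilon> z0 x" by (rule eps_d_bd_less)
  finally have "(\<epsilon> * dist x y) * (2 * rho_eps \<epsilon> z0 x) < exp (- 1) * (2 * rho_eps \<epsilon> z0 x)"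
    by (simp add: ac_simps)
  then have "\<epsilon> * dist x y < exp (- 1)"
    using rho_eps_pos[of \<epsilon> z0 x] by (simp add: mult_less_cancel_right_pos)
  also have "\<dots> \<le> 1 + \<epsilon> * M"
  proof -
    have "exp (- 1) \<le> (1::real)" "0 \<le> \<epsilon> * M" using eps_M_nonneg by auto
    then show ?thesis by linarith
  qed
  finally have "\<epsilon> * dist x y \<le> 1 + \<epsilon> * M" by simp
  then have "exp (- (1 + \<epsilon> * M)) * exp (\<epsilon> * dist x y) \<le> 1"
    by (simp add: exp_add[symmetric])
  have "d_eps \<epsilon> z0 x y \<le> rho_eps \<epsilon> z0 x * dist x y * exp (\<epsilon> * dist x y)"
    by (rule d_eps_le_rho_eps_dist_exp)
  also have "\<dots> < exp (- (1 + \<epsilon> * M)) * r * exp (\<epsilon> * dist x y)"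
    using D by simp
  also have "\<dots> \<le> r"
    using \<open>exp (- (1 + \<epsilon> * M)) * exp (\<epsilon> * dist x y) \<le> 1\<close> r(1) by (simp add: mult.commute mult.left_commute)
  finally show "y \<in> {y. d_eps \<epsilon> z0 x y < r}" by simp
qed

lemma d_eps_le_exp_exp_rho_eps_dist:
  assumes d: "d_eps \<epsilon> z0 x y < r"
    and r: "4 * (2 * exp (\<epsilon> * M) - 1) * r \<le> exp (- (1 + \<epsilon> * M)) * d_bd (d_eps \<epsilon> z0) x"
  shows "d_eps \<epsilon> z0 x y \<le> exp (exp (- 1)) * rho_eps \<epsilon> z0 x * dist x y"
proof -
  let ?K = "2 * exp (\<epsilon> * M) - 1"
  have "0 \<le> r" using d d_eps_nonneg[of x y] by simp
  have "exp (- (1 + \<epsilon> * M)) * d_bd (d_eps \<epsilon> z0) x \<le> d_bd (d_eps \<epsilon> z0) x"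
    using d_bd_nonneg[of x] eps_M_nonneg by (intro mult_left_le_one_le) auto
  moreover have "4 * r \<le> 4 * ?K * r"
    using mult_right_mono[OF one_le_starlike_const \<open>0 \<le> r\<close>] by (simp only: mult.assoc)
  ultimately have "r \<le> d_bd (d_eps \<epsilon> z0) x / 2" using r \<open>0 \<le> r\<close> d_bd_nonneg[of x] by linarith
  then have "2 * \<epsilon> * (rho_eps \<epsilon> z0 x * dist x y) < 2 * \<epsilon> * (2 * ?K * r)"
    using rho_eps_dist_less_of_d_eps_less[OF d] eps_pos by simp
  also have "\<dots> \<le> \<epsilon> * exp (- (1 + \<epsilon> * M)) * d_bd (d_eps \<epsilon> z0) x"
    using r eps_pos by (simp add: ac_simps)
  also have "\<dots> < 2 * exp (- 1) * rho_eps \<epsilon> z0 x" by (rule eps_d_bd_less)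
  finally have "(\<epsilon> * dist x y) * (2 * rho_eps \<epsilon> z0 x) < exp (- 1) * (2 * rho_eps \<epsilon> z0 x)"
    by (simp add: ac_simps)
  then have "\<epsilon> * dist x y < exp (- 1)"
    using rho_eps_pos[of \<epsilon> z0 x] by (simp add: mult_less_cancel_right_pos)
  then have "rho_eps \<epsilon> z0 x * dist x y * exp (\<epsilon> * dist x y) \<le> rho_eps \<epsilon> z0 x * dist x y * exp (exp (- 1))"
    using rho_eps_pos[of \<epsilon> z0 x] by (intro mult_left_mono) auto
  then show ?thesis using d_eps_le_rho_eps_dist_exp[of x y] by (simp add: ac_simps)
qed

lemma d_eps_comparable_to_dist:
  fixes C1 C2 :: real
  defines "C1 \<equiv> exp (- (1 + \<epsilon> * M))" and "C2 \<equiv> 2 * exp 1 * (2 * exp (\<epsilon> * M) - 1)"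
  assumes "y \<noteq> x" and d: "d_eps \<epsilon> z0 x y < C1 * d_bd (d_eps \<epsilon> z0) x / (2 * C2)"
  shows "rho_eps \<epsilon> z0 x / C2 * dist x y < d_eps \<epsilon> z0 x y"
    and "d_eps \<epsilon> z0 x y \<le> exp (exp (- 1)) * rho_eps \<epsilon> z0 x * dist x y"
proof -
  let ?K = "2 * exp (\<epsilon> * M) - 1"
  have K: "0 < 2 * ?K" by (rule starlike_const_pos)
  have "2 * ?K < C2" unfolding C2_def by (rule starlike_const_less)
  have "C1 \<le> 1" unfolding C1_def using eps_M_nonneg by simp
  have "0 \<le> C1" "0 \<le> d_bd (d_eps \<epsilon> z0) x" unfolding C1_def using d_bd_nonneg by auto
  have "C1 \<le> C2" using \<open>C1 \<le> 1\<close> \<open>2 * ?K < C2\<close> one_le_starlike_const by argo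
  then have "C1 * d_bd (d_eps \<epsilon> z0) x \<le> C2 * d_bd (d_eps \<epsilon> z0) x"
    using \<open>0 \<le> d_bd (d_eps \<epsilon> z0) x\<close> by (rule mult_right_mono)
  then have "C1 * d_bd (d_eps \<epsilon> z0) x / (2 * C2) \<le> d_bd (d_eps \<epsilon> z0) x / 2"
    using \<open>2 * ?K < C2\<close> K by (simp add: field_simps)
  then have half: "d_eps \<epsilon> z0 x y < d_bd (d_eps \<epsilon> z0) x / 2" using d by simp
  have "0 < rho_eps \<epsilon> z0 x * dist x y" using \<open>y \<noteq> x\<close> rho_eps_pos[of \<epsilon> z0 x] by simp
  then have "rho_eps \<epsilon> z0 x * dist x y / C2 < rho_eps \<epsilon> z0 x * dist x y / (2 * ?K)"
    using \<open>2 * ?K < C2\<close> K by (intro divide_strict_left_mono) auto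
  also have "\<dots> \<le> d_eps \<epsilon> z0 x y" using rho_eps_dist_le_d_eps[OF half] by simp
  finally show "rho_eps \<epsilon> z0 x / C2 * dist x y < d_eps \<epsilon> z0 x y" by simp
  have "4 * ?K * (C1 * d_bd (d_eps \<epsilon> z0) x / (2 * C2)) = C1 * d_bd (d_eps \<epsilon> z0) x / exp 1"
    unfolding C2_def using K by (simp add: field_simps)
  also have "\<dots> \<le> C1 * d_bd (d_eps \<epsilon> z0) x"
    using \<open>0 \<le> C1\<close> \<open>0 \<le> d_bd (d_eps \<epsilon> z0) x\<close> by (simp add: divide_le_eq mult_le_cancel_left1 not_less)
  finally show "d_eps \<epsilon> z0 x y \<le> exp (exp (- 1)) * rho_eps \<epsilon> z0 x * dist x y"
    using d unfolding C1_def by (intro d_eps_le_exp_exp_rho_eps_dist)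
qed

end

theorem theorem2p10:
  fixes z0 :: "'a::metric_space" and \<delta> M \<epsilon> :: real
  assumes hyp: "gromov_hyperbolic TYPE('a) \<delta>"
    and lc: "locally_compact_space (euclidean :: 'a topology)"
    and rs: "roughly_starlike z0 M"
    and eps: "0 < \<epsilon>"
    and eps0_unif: "uniform_wrt (d_eps \<epsilon> z0)"
    and eps0_cpt: "totally_bounded_wrt (d_eps \<epsilon> z0)"
    and eps0_geod: "completion_geodesic (d_eps \<epsilon> z0)"
  shows "(\<forall>x::'a. \<forall>r. 0 < r \<and> r \<le> d_bd (d_eps \<epsilon> z0) x / 2 \<longrightarrow>
            ball x (exp (- (1 + \<epsilon> * M)) * r / rho_eps \<epsilon> z0 x) \<subseteq> {y. d_eps \<epsilon> z0 x y < r} \<and>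
            {y. d_eps \<epsilon> z0 x y < r} \<subseteq>
              ball x (2 * exp 1 * (2 * exp (\<epsilon> * M) - 1) * r / rho_eps \<epsilon> z0 x))
       \<and> (\<forall>x y::'a. y \<noteq> x \<and> d_eps \<epsilon> z0 x y <
              exp (- (1 + \<epsilon> * M)) * d_bd (d_eps \<epsilon> z0) x / (2 * (2 * exp 1 * (2 * exp (\<epsilon> * M) - 1)))
            \<longrightarrow> rho_eps \<epsilon> z0 x / (2 * exp 1 * (2 * exp (\<epsilon> * M) - 1)) * dist x y < d_eps \<epsilon> z0 x y
              \<and> d_eps \<epsilon> z0 x y \<le> exp (exp (-1)) * rho_eps \<epsilon> z0 x * dist x y)"
proof -
  interpret roughly_starlike_deformation \<epsilon> z0 M
    using eps hyp rs unfolding gromov_hyperbolic_def by unfold_locales auto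
  have "{y. d_eps \<epsilon> z0 x y < r} \<subseteq> ball x (2 * exp 1 * (2 * exp (\<epsilon> * M) - 1) * r / rho_eps \<epsilon> z0 x)"
    if "0 < r" "r \<le> d_bd (d_eps \<epsilon> z0) x / 2" for x r
  proof -
    have "2 * (2 * exp (\<epsilon> * M) - 1) * r / rho_eps \<epsilon> z0 x
        \<le> 2 * exp 1 * (2 * exp (\<epsilon> * M) - 1) * r / rho_eps \<epsilon> z0 x"
      using \<open>0 < r\<close> rho_eps_pos[of \<epsilon> z0 x]
      by (intro divide_right_mono mult_right_mono less_imp_le[OF starlike_const_less]) auto
    then show ?thesis using d_eps_ball_subset_ball[OF that(2)] subset_ball by blast
  qed
  then show ?thesis using ball_subset_d_eps_ball d_eps_comparable_to_dist by blast
qed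

end
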